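(* Let $\mathcal P=\mathcal P(V,R)$ be a binary quadratic operad over a field $\Bbbk$ (with $\dim V<\infty$) which is a Dong operad. Then the operads $\mathrm{di}\,\mathcal P=\mathrm{Perm}\otimes\mathcal P$ and $\mathrm{tri}\,\mathcal P=\mathrm{ComTriAs}\otimes\mathcal P$ (Hadamard products, governing the di- and tri-algebra replications of $\mathcal P$-algebras) are also Dong operads.
   Context: A binary quadratic operad $\mathcal P(V,R)$ is generated by a finite-dimensional $S_2$-module $V$ of binary operations with relations $R\subseteq\mathcal F_V(3)$, where $\mathcal F_V$ is the free operad on $V$. $\mathrm{Perm}$ is the operad of Perm algebras (associative algebras with $(xy)z=(yx)z$), $\mathrm{ComTriAs}$ the operad of commutative triassociative algebras; $\otimes$ denotes the Hadamard (arity-wise tensor) product of operads. Formal distributions and the Dong Property: for an algebra $A$ with a family of bilinear operations (the operations of $V$, a family closed under the $S_2$-action), a formal distribution over $A$ is a series $a(z)=\sum_{s\in\mathbb Z}a(s)z^{-s-1}$ with $a(s)\in A$. Two distributions $a(z),b(z)$ are local if for every operation $*$ there is $N\ge0$ with $(w-z)^N a(w)*b(z)=0$ in $A[[z,z^{-1},w,w^{-1}]]$ (and likewise with $a,b$ interchanged). For $n\in\mathbb Z_+$ and an operation $*$, the $n$-product is $(a\,{*}_{(n)}\,b)(w)=\mathrm{Res}_{\xi=0}(\xi-w)^n a(\xi)*b(w)$. An operad $\mathcal P$ is a Dong operad (satisfies the Dong Property) if for every $\mathcal P$-algebra $A$ and every three pairwise local formal distributions $a(z),b(z),c(z)$ over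 $A$, the distributions $(a\,{*}_{(n)}\,b)(z)$ and $c(z)$ are local for every $n\in\mathbb Z_+$ and every operation $*$. *)

theory Defs
  imports Main
begin

text \<open>Variables of arity 3, Perm(2) basis (marked input), ComTriAs(2) basis (nonempty subsets of {1,2}).\<close>
datatype v3 = X1 | X2 | X3
datatype two = T1 | T2
datatype ct2 = C1 | C2 | C12

instance v3 :: finite
proof
  have "UNIV = {X1, X2, X3}" by (auto intro: v3.exhaust)
  then show "finite (UNIV :: v3 set)" by (metis finite.emptyI finite_insert)
qed

instance two :: finite
proof
  have "UNIV = {T1, T2}" by (auto intro: two.exhaust)
  then show "finite (UNIV :: two set)" by (metis finite.emptyI finite_insert)
qed

instance ct2 :: finite
proof
  have "UNIV = {C1, C2, C12}" by (auto intro: ct2.exhaust)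
  then show "finite (UNIV :: ct2 set)" by (metis finite.emptyI finite_insert)
qed

text \<open>A binary quadratic operad P(V,R): V = k^'o (basis 'o, finite), with S2-action given by the
  matrix tau (tau applied to basis vector mu is  sum_nu tau mu nu * nu, and (tau v)(x,y) = v(y,x)),
  and R a set of elements of F_V(3). An element of F_V(3) is represented by coefficients c on tree
  monomials (mu,nu,a,b,c) standing for  mu(nu(x_a,x_b),x_c)  (a,b,c pairwise distinct).\<close>
type_synonym ('o,'k) mon3 = "'o \<times> 'o \<times> v3 \<times> v3 \<times> v3"
type_synonym ('o,'k) bqop = "('o \<Rightarrow> 'o \<Rightarrow> 'k) \<times> (('o \<times> 'o \<times> v3 \<times> v3 \<times> v3 \<Rightarrow> 'k) set)"

definition dist3 :: "v3 \<Rightarrow> v3 \<Rightarrow> v3 \<Rightarrow> bool" where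
  "dist3 a b c \<longleftrightarrow> a \<noteq> b \<and> b \<noteq> c \<and> a \<noteq> c"

definition bq_operad :: "('o::finite, 'k::field) bqop \<Rightarrow> bool" where
  "bq_operad P \<longleftrightarrow>
     (\<forall>\<mu> \<kappa>. (\<Sum>\<nu>\<in>UNIV. fst P \<mu> \<nu> * fst P \<nu> \<kappa>) = (if \<mu> = \<kappa> then 1 else 0)) \<and>
     (\<forall>r\<in>snd P. \<forall>\<mu> \<nu> a b c. \<not> dist3 a b c \<longrightarrow> r (\<mu>, \<nu>, a, b, c) = 0)"

definition fspan :: "('m \<Rightarrow> 'k::field) set \<Rightarrow> ('m \<Rightarrow> 'k) set" where
  "fspan S = {g. \<exists>F u. finite F \<and> F \<subseteq> S \<and> g = (\<lambda>m. \<Sum>f\<in>F. u f * f m)}"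

definition emono :: "'m \<Rightarrow> 'm \<Rightarrow> 'k::field" where
  "emono m = (\<lambda>m'. if m' = m then 1 else 0)"

text \<open>Kernel of the representation map onto F_V(3): nu(x_a,x_b) = (tau nu)(x_b,x_a).\<close>
definition Ktau :: "('o::finite \<Rightarrow> 'o \<Rightarrow> 'k::field) \<Rightarrow> (('o \<times> 'o \<times> v3 \<times> v3 \<times> v3) \<Rightarrow> 'k) set" where
  "Ktau tau = {(\<lambda>m. emono (\<mu>, \<nu>, a, b, c) m - (\<Sum>\<nu>'\<in>UNIV. tau \<nu> \<nu>' * emono (\<mu>, \<nu>', b, a, c) m))
                | \<mu> \<nu> a b c. dist3 a b c}"

definition act3 :: "(v3 \<Rightarrow> v3) \<Rightarrow> ('o \<times> 'o \<times> v3 \<times> v3 \<times> v3 \<Rightarrow> 'k) \<Rightarrow> ('o \<times> 'o \<times> v3 \<times> v3 \<times> v3 \<Rightarrow> 'k)" where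
  "act3 \<sigma> r = (\<lambda>(\<mu>, \<nu>, a, b, c). r (\<mu>, \<nu>, \<sigma> a, \<sigma> b, \<sigma> c))"

text \<open>Arity-3 component of the operadic ideal generated by R (pulled back to representatives).\<close>
definition ideal3 :: "('o::finite, 'k::field) bqop \<Rightarrow> ('o \<times> 'o \<times> v3 \<times> v3 \<times> v3 \<Rightarrow> 'k) set" where
  "ideal3 P = fspan ({act3 \<sigma> r | \<sigma> r. bij \<sigma> \<and> r \<in> snd P} \<union> Ktau (fst P))"

text \<open>sel p q a b c = label in Q(3) of the composite tree  p(q(x_a,x_b),x_c)  in the set operad Q.\<close>
definition sel_perm :: "two \<Rightarrow> two \<Rightarrow> v3 \<Rightarrow> v3 \<Rightarrow> v3 \<Rightarrow> v3" where
  "sel_perm p q a b c = (case p of T2 \<Rightarrow> c | T1 \<Rightarrow> (case q of T1 \<Rightarrow> a | T2 \<Rightarrow> b))"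

definition ct_has1 :: "ct2 \<Rightarrow> bool" where "ct_has1 p \<longleftrightarrow> p \<noteq> C2"
definition ct_has2 :: "ct2 \<Rightarrow> bool" where "ct_has2 p \<longleftrightarrow> p \<noteq> C1"

definition sel_ct :: "ct2 \<Rightarrow> ct2 \<Rightarrow> v3 \<Rightarrow> v3 \<Rightarrow> v3 \<Rightarrow> v3 set" where
  "sel_ct p q a b c =
     (if ct_has1 p then (if ct_has1 q then {a} else {}) \<union> (if ct_has2 q then {b} else {}) else {})
     \<union> (if ct_has2 p then {c} else {})"

definition swp_perm :: "two \<Rightarrow> two" where "swp_perm p = (case p of T1 \<Rightarrow> T2 | T2 \<Rightarrow> T1)"
definition swp_ct :: "ct2 \<Rightarrow> ct2" where "swp_ct p = (case p of C1 \<Rightarrow> C2 | C2 \<Rightarrow> C1 | C12 \<Rightarrow> C12)"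

definition had_tau :: "('l \<Rightarrow> 'l) \<Rightarrow> ('o \<Rightarrow> 'o \<Rightarrow> 'k::field) \<Rightarrow> ('o \<times> 'l) \<Rightarrow> ('o \<times> 'l) \<Rightarrow> 'k" where
  "had_tau swp tau = (\<lambda>(\<mu>, p) (\<nu>, q). tau \<mu> \<nu> * (if q = swp p then 1 else 0))"

text \<open>Relations of the Hadamard product Q (x) P in arity 3: kernel of F_W(3) -> Q(3) (x) P(3),
  W = Q(2) (x) V.\<close>
definition had_rel :: "('o::finite, 'k::field) bqop \<Rightarrow> ('l::finite \<Rightarrow> 'l \<Rightarrow> v3 \<Rightarrow> v3 \<Rightarrow> v3 \<Rightarrow> 's)
     \<Rightarrow> (('o \<times> 'l) \<times> ('o \<times> 'l) \<times> v3 \<times> v3 \<times> v3 \<Rightarrow> 'k) set" where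
  "had_rel P sel = {r. (\<forall>\<mu> \<nu> a b c. \<not> dist3 a b c \<longrightarrow> r (\<mu>, \<nu>, a, b, c) = 0) \<and>
      (\<forall>s. (\<lambda>(\<mu>, \<nu>, a, b, c). \<Sum>pq\<in>{pq. sel (fst pq) (snd pq) a b c = s}.
              r ((\<mu>, fst pq), (\<nu>, snd pq), a, b, c)) \<in> ideal3 P)}"

definition di :: "('o::finite, 'k::field) bqop \<Rightarrow> ('o \<times> two, 'k) bqop" where
  "di P = (had_tau swp_perm (fst P), had_rel P sel_perm)"

definition tri :: "('o::finite, 'k::field) bqop \<Rightarrow> ('o \<times> ct2, 'k) bqop" where
  "tri P = (had_tau swp_ct (fst P), had_rel P sel_ct)"

record ('b, 'k, 'o) alg =
  carr :: "'b set"
  addA :: "'b \<Rightarrow> 'b \<Rightarrow> 'b"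
  zeroA :: 'b
  scaleA :: "'k \<Rightarrow> 'b \<Rightarrow> 'b"
  opA :: "('o \<Rightarrow> 'k) \<Rightarrow> 'b \<Rightarrow> 'b \<Rightarrow> 'b"

definition asum :: "('b, 'k, 'o) alg \<Rightarrow> ('i \<Rightarrow> 'b) \<Rightarrow> 'i set \<Rightarrow> 'b" where
  "asum A f I = foldr (\<lambda>i acc. addA A (f i) acc) (SOME xs. distinct xs \<and> set xs = I) (zeroA A)"

definition kvs :: "('b, 'k::field, 'o) alg \<Rightarrow> bool" where
  "kvs A \<longleftrightarrow> zeroA A \<in> carr A \<and>
     (\<forall>x\<in>carr A. \<forall>y\<in>carr A. addA A x y \<in> carr A) \<and>
     (\<forall>c. \<forall>x\<in>carr A. scaleA A c x \<in> carr A) \<and>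
     (\<forall>x\<in>carr A. \<forall>y\<in>carr A. \<forall>z\<in>carr A. addA A (addA A x y) z = addA A x (addA A y z)) \<and>
     (\<forall>x\<in>carr A. \<forall>y\<in>carr A. addA A x y = addA A y x) \<and>
     (\<forall>x\<in>carr A. addA A (zeroA A) x = x) \<and>
     (\<forall>x\<in>carr A. addA A x (scaleA A (-1) x) = zeroA A) \<and>
     (\<forall>x\<in>carr A. scaleA A 1 x = x) \<and>
     (\<forall>c d. \<forall>x\<in>carr A. scaleA A (c * d) x = scaleA A c (scaleA A d x)) \<and>
     (\<forall>c d. \<forall>x\<in>carr A. scaleA A (c + d) x = addA A (scaleA A c x) (scaleA A d x)) \<and>
     (\<forall>c. \<forall>x\<in>carr A. \<forall>y\<in>carr A. scaleA A c (addA A x y) = addA A (scaleA A c x) (scaleA A c y))"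

definition bvec :: "'o \<Rightarrow> 'o \<Rightarrow> 'k::field" where
  "bvec \<mu> = (\<lambda>\<nu>. if \<nu> = \<mu> then 1 else 0)"

definition tauV :: "('o::finite \<Rightarrow> 'o \<Rightarrow> 'k::field) \<Rightarrow> ('o \<Rightarrow> 'k) \<Rightarrow> ('o \<Rightarrow> 'k)" where
  "tauV tau v = (\<lambda>\<nu>'. \<Sum>\<nu>\<in>UNIV. v \<nu> * tau \<nu> \<nu>')"

definition eval3 :: "('b, 'k::field, 'o::finite) alg \<Rightarrow> ('o \<times> 'o \<times> v3 \<times> v3 \<times> v3 \<Rightarrow> 'k) \<Rightarrow> (v3 \<Rightarrow> 'b) \<Rightarrow> 'b" where
  "eval3 A r x = asum A (\<lambda>(\<mu>, \<nu>, a, b, c).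
      scaleA A (r (\<mu>, \<nu>, a, b, c)) (opA A (bvec \<mu>) (opA A (bvec \<nu>) (x a) (x b)) (x c))) UNIV"

definition is_alg :: "('o::finite, 'k::field) bqop \<Rightarrow> ('b, 'k, 'o) alg \<Rightarrow> bool" where
  "is_alg P A \<longleftrightarrow> kvs A \<and>
     (\<forall>v. \<forall>x\<in>carr A. \<forall>y\<in>carr A. opA A v x y \<in> carr A) \<and>
     (\<forall>v. \<forall>x\<in>carr A. \<forall>x'\<in>carr A. \<forall>y\<in>carr A.
         opA A v (addA A x x') y = addA A (opA A v x y) (opA A v x' y) \<and>
         opA A v y (addA A x x') = addA A (opA A v y x) (opA A v y x')) \<and>
     (\<forall>v c. \<forall>x\<in>carr A. \<forall>y\<in>carr A.
         opA A v (scaleA A c x) y = scaleA A c (opA A v x y) \<and>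
         opA A v x (scaleA A c y) = scaleA A c (opA A v x y)) \<and>
     (\<forall>v w. \<forall>x\<in>carr A. \<forall>y\<in>carr A.
         opA A (\<lambda>i. v i + w i) x y = addA A (opA A v x y) (opA A w x y)) \<and>
     (\<forall>v c. \<forall>x\<in>carr A. \<forall>y\<in>carr A. opA A (\<lambda>i. c * v i) x y = scaleA A c (opA A v x y)) \<and>
     (\<forall>v. \<forall>x\<in>carr A. \<forall>y\<in>carr A. opA A (tauV (fst P) v) x y = opA A v y x) \<and>
     (\<forall>r\<in>snd P. \<forall>x. (\<forall>i. x i \<in> carr A) \<longrightarrow> eval3 A r x = zeroA A)"

text \<open>a(z) = sum_s a(s) z^(-s-1) is represented by its coefficient function s :: int => a(s).\<close>
definition distr :: "('b, 'k, 'o) alg \<Rightarrow> (int \<Rightarrow> 'b) \<Rightarrow> bool" where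
  "distr A a \<longleftrightarrow> (\<forall>s. a s \<in> carr A)"

text \<open>Coefficient of w^(-m-1) z^(-n-1) in (w-z)^N a(w)*b(z).\<close>
definition loc_coef :: "('b, 'k::field, 'o) alg \<Rightarrow> ('o \<Rightarrow> 'k) \<Rightarrow> (int \<Rightarrow> 'b) \<Rightarrow> (int \<Rightarrow> 'b) \<Rightarrow> nat \<Rightarrow> int \<Rightarrow> int \<Rightarrow> 'b" where
  "loc_coef A v a b N m n = asum A (\<lambda>i. scaleA A (of_int ((-1) ^ i * int (N choose i)))
      (opA A v (a (m + int N - int i)) (b (n + int i)))) {0..N}"

definition local_op :: "('b, 'k::field, 'o) alg \<Rightarrow> ('o \<Rightarrow> 'k) \<Rightarrow> (int \<Rightarrow> 'b) \<Rightarrow> (int \<Rightarrow> 'b) \<Rightarrow> bool" where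
  "local_op A v a b \<longleftrightarrow> (\<exists>N. \<forall>m n. loc_coef A v a b N m n = zeroA A)"

definition local :: "('b, 'k::field, 'o) alg \<Rightarrow> (int \<Rightarrow> 'b) \<Rightarrow> (int \<Rightarrow> 'b) \<Rightarrow> bool" where
  "local A a b \<longleftrightarrow> (\<forall>v. local_op A v a b \<and> local_op A v b a)"

text \<open>(a *_(n) b)(w) = Res_xi (xi-w)^n a(xi)*b(w); coefficient of w^(-m-1).\<close>
definition nprod :: "('b, 'k::field, 'o) alg \<Rightarrow> ('o \<Rightarrow> 'k) \<Rightarrow> nat \<Rightarrow> (int \<Rightarrow> 'b) \<Rightarrow> (int \<Rightarrow> 'b) \<Rightarrow> (int \<Rightarrow> 'b)" where
  "nprod A v n a b = (\<lambda>m. asum A (\<lambda>i. scaleA A (of_int ((-1) ^ i * int (n choose i)))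
      (opA A v (a (int n - int i)) (b (m + int i)))) {0..n})"

definition dong_alg :: "('b, 'k::field, 'o) alg \<Rightarrow> bool" where
  "dong_alg A \<longleftrightarrow> (\<forall>a b c. distr A a \<and> distr A b \<and> distr A c \<and>
      local A a b \<and> local A b c \<and> local A a c \<longrightarrow>
      (\<forall>n v. local A (nprod A v n a b) c))"

text \<open>P is a Dong operad w.r.t. all P-algebras whose carrier lies in the type 'b.\<close>
definition dong_in :: "'b itself \<Rightarrow> ('o::finite, 'k::field) bqop \<Rightarrow> bool" where
  "dong_in _ P \<longleftrightarrow> (\<forall>A :: ('b, 'k, 'o) alg. is_alg P A \<longrightarrow> dong_alg A)"

end

(*
  Let A be a di- or tri-P-algebra: every operation of V comes in versions x -| y and x |- y
  (and x _|_ y for tri-algebras), according to which inputs the Perm or ComTriAs factor marks.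
  The differences between two versions of one operation span an ideal I of A, and
  hat A = A/I (+) A is a P-algebra under
    [u] [v] = [u -| v],   x [v] = x -| v,   [u] y = u |- y,   x y = x _|_ y  (0 for di-algebras).
  Evaluating a relation of P in hat A and sorting its monomials by the set of arguments taken from
  the summand A, each part is a relation of the Hadamard product evaluated in A, hence zero.
  Distributions of A embed into hat A via x |-> [x] and x |-> x, and n-products and locality
  coefficients of embedded distributions are embeddings of those of A for -|, |- and _|_.
  The Dong property of hat A (transported into the carrier type of the hypothesis) thus gives it
  in A for these operations, and general operations are linear combinations of them. The cases
  not reached this way, an n-product as left argument of |- or right argument of -|, follow
  because x |- y and y -| x depend on x only modulo I.
*)
theory Submission
  imports Defs
begin

section \<open>Vector spaces and finite sums\<close>

lemma some_distinct_list:
  "finite I \<Longrightarrow> distinct (SOME xs. distinct xs \<and> set xs = I) \<and> set (SOME xs. distinct xs \<and> set xs = I) = I"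
  by (metis (mono_tags, lifting) finite_distinct_list someI_ex)

locale kvec =
  fixes A :: "('b, 'k::field, 'o) alg"
  assumes kvs: "kvs A"
begin

abbreviation "C \<equiv> carr A"
abbreviation "vadd \<equiv> addA A"
abbreviation "vzero \<equiv> zeroA A"
abbreviation "vscale \<equiv> scaleA A"
abbreviation vdiff :: "'b \<Rightarrow> 'b \<Rightarrow> 'b" where "vdiff x y \<equiv> vadd x (vscale (-1) y)"

lemma vzero_in [simp]: "vzero \<in> C"
  and vadd_in [simp]: "x \<in> C \<Longrightarrow> y \<in> C \<Longrightarrow> vadd x y \<in> C"
  and vscale_in [simp]: "x \<in> C \<Longrightarrow> vscale c x \<in> C"
  and vadd_assoc: "x \<in> C \<Longrightarrow> y \<in> C \<Longrightarrow> z \<in> C \<Longrightarrow> vadd (vadd x y) z = vadd x (vadd y z)"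
  and vadd_commute: "x \<in> C \<Longrightarrow> y \<in> C \<Longrightarrow> vadd x y = vadd y x"
  and vadd_zero_left [simp]: "x \<in> C \<Longrightarrow> vadd vzero x = x"
  and vadd_neg: "x \<in> C \<Longrightarrow> vadd x (vscale (-1) x) = vzero"
  and vscale_one [simp]: "x \<in> C \<Longrightarrow> vscale 1 x = x"
  and vscale_mult: "x \<in> C \<Longrightarrow> vscale (c * d) x = vscale c (vscale d x)"
  and vscale_add_left: "x \<in> C \<Longrightarrow> vscale (c + d) x = vadd (vscale c x) (vscale d x)"
  and vscale_add_right: "x \<in> C \<Longrightarrow> y \<in> C \<Longrightarrow> vscale c (vadd x y) = vadd (vscale c x) (vscale c y)"
  using kvs unfolding kvs_def by auto

lemma vadd_zero_right [simp]: "x \<in> C \<Longrightarrow> vadd x vzero = x"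
  by (metis vadd_commute vadd_zero_left vzero_in)

lemma vadd_left_commute: "x \<in> C \<Longrightarrow> y \<in> C \<Longrightarrow> z \<in> C \<Longrightarrow> vadd x (vadd y z) = vadd y (vadd x z)"
  by (metis vadd_assoc vadd_commute)

lemma vadd_left_cancel:
  assumes "x \<in> C" "y \<in> C" "z \<in> C" "vadd x y = vadd x z"
  shows "y = z"
proof -
  have "y = vadd (vadd (vscale (-1) x) x) y" using assms by (simp add: vadd_commute vadd_neg)
  also have "\<dots> = vadd (vadd (vscale (-1) x) x) z" using assms by (simp add: vadd_assoc)
  also have "\<dots> = z" using assms by (simp add: vadd_commute vadd_neg)
  finally show ?thesis .
qed

lemma vscale_zero_left [simp]: "x \<in> C \<Longrightarrow> vscale 0 x = vzero"
  using vscale_add_left[of x 0 0] vadd_left_cancel[of "vscale 0 x" "vscale 0 x" vzero] by simp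

lemma vscale_zero_right [simp]: "vscale c vzero = vzero"
  using vscale_add_right[of vzero vzero c] vadd_left_cancel[of "vscale c vzero" "vscale c vzero" vzero] by simp

lemma vadd_swap_middle:
  "a \<in> C \<Longrightarrow> b \<in> C \<Longrightarrow> c \<in> C \<Longrightarrow> d \<in> C \<Longrightarrow> vadd (vadd a b) (vadd c d) = vadd (vadd a c) (vadd b d)"
  by (simp add: vadd_assoc vadd_left_commute[of b c])

lemma vadd_swap_middle3:
  "a1 \<in> C \<Longrightarrow> a2 \<in> C \<Longrightarrow> b1 \<in> C \<Longrightarrow> b2 \<in> C \<Longrightarrow> c1 \<in> C \<Longrightarrow> c2 \<in> C \<Longrightarrow>
    vadd (vadd (vadd a1 a2) (vadd b1 b2)) (vadd c1 c2) = vadd (vadd (vadd a1 b1) c1) (vadd (vadd a2 b2) c2)"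
  using vadd_swap_middle[of a1 a2 b1 b2] vadd_swap_middle[of "vadd a1 b1" "vadd a2 b2" c1 c2] by simp

lemma vdiff_self [simp]: "x \<in> C \<Longrightarrow> vdiff x x = vzero"
  by (simp add: vadd_neg)

lemma vdiff_eq_zero_iff:
  assumes "x \<in> C" "y \<in> C"
  shows "vdiff x y = vzero \<longleftrightarrow> x = y"
proof
  assume xy: "vdiff x y = vzero"
  have "vadd (vscale (-1) y) x = vdiff x y" using assms by (intro vadd_commute) auto
  also have "\<dots> = vdiff y y" using xy assms by simp
  also have "\<dots> = vadd (vscale (-1) y) y" using assms by (intro vadd_commute) auto
  finally show "x = y" by (rule vadd_left_cancel[rotated 3]) (use assms in auto)
qed (simp add: assms)

lemma vscale_vdiff: "x \<in> C \<Longrightarrow> y \<in> C \<Longrightarrow> vscale c (vdiff x y) = vdiff (vscale c x) (vscale c y)"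
  by (simp add: vscale_add_right flip: vscale_mult)

lemma vdiff_vadd: "a \<in> C \<Longrightarrow> b \<in> C \<Longrightarrow> c \<in> C \<Longrightarrow> d \<in> C \<Longrightarrow>
  vdiff (vadd a b) (vadd c d) = vadd (vdiff a c) (vdiff b d)"
  using vadd_swap_middle[of a b "vscale (-1) c" "vscale (-1) d"] by (simp add: vscale_add_right)

lemma vdiff_trans:
  assumes "a \<in> C" "b \<in> C" "c \<in> C"
  shows "vadd (vdiff a b) (vdiff b c) = vdiff a c"
proof -
  have "vadd (vscale (-1) b) b = vzero" using assms by (simp add: vadd_commute vadd_neg)
  then have "vadd (vdiff a b) (vdiff b c) = vadd a (vadd vzero (vscale (-1) c))"
    using assms by (simp add: vadd_assoc flip: vadd_assoc[of "vscale (-1) b" b])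
  then show ?thesis using assms by simp
qed

lemma vdiff_commute: "a \<in> C \<Longrightarrow> b \<in> C \<Longrightarrow> vdiff b a = vscale (-1) (vdiff a b)"
  using vadd_commute[of b "vscale (-1) a"] by (simp add: vscale_add_right flip: vscale_mult)

lemma vdiff_vdiff_same: "a \<in> C \<Longrightarrow> b \<in> C \<Longrightarrow> c \<in> C \<Longrightarrow> vdiff (vdiff a c) (vdiff b c) = vdiff a b"
  using vdiff_commute[of b c] vdiff_trans[of a c b] by simp

lemma vscale_vdiff_left: "x \<in> C \<Longrightarrow> vdiff (vscale c x) (vscale d x) = vscale (c - d) x"
  using vscale_add_left[of x c "-d"] vscale_mult[of x "-1" d] by simp

definition vsum_list :: "('i \<Rightarrow> 'b) \<Rightarrow> 'i list \<Rightarrow> 'b" where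
  "vsum_list f xs = foldr (\<lambda>i acc. vadd (f i) acc) xs vzero"

lemma vsum_list_Nil [simp]: "vsum_list f [] = vzero"
  and vsum_list_Cons [simp]: "vsum_list f (x # xs) = vadd (f x) (vsum_list f xs)"
  by (simp_all add: vsum_list_def)

lemma vsum_list_in [simp]: "\<forall>i\<in>set xs. f i \<in> C \<Longrightarrow> vsum_list f xs \<in> C"
  by (induction xs) auto

lemma vsum_list_move_to_front:
  "\<forall>i\<in>set (ys @ x # zs). f i \<in> C \<Longrightarrow> vsum_list f (ys @ x # zs) = vadd (f x) (vsum_list f (ys @ zs))"
proof (induction ys)
  case (Cons y ys)
  have "vsum_list f (ys @ zs) \<in> C" using Cons.prems by (intro vsum_list_in) auto
  then show ?case using Cons by (simp add: vadd_left_commute[of "f y" "f x"])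
qed simp

lemma vsum_list_perm:
  "distinct xs \<Longrightarrow> distinct ys \<Longrightarrow> set xs = set ys \<Longrightarrow> \<forall>i\<in>set xs. f i \<in> C \<Longrightarrow>
    vsum_list f xs = vsum_list f ys"
proof (induction xs arbitrary: ys)
  case (Cons x xs)
  then have "x \<in> set ys" by auto
  then obtain ys1 ys2 where ys: "ys = ys1 @ x # ys2" by (meson split_list)
  have "set xs = set (ys1 @ ys2)" using Cons.prems ys by auto
  then have "vsum_list f xs = vsum_list f (ys1 @ ys2)" using Cons.prems ys by (intro Cons.IH) auto
  then show ?case using ys Cons.prems vsum_list_move_to_front[of ys1 x ys2 f] by simp
qed simp

lemma asum_eq_vsum_list:
  "finite I \<Longrightarrow> distinct xs \<Longrightarrow> set xs = I \<Longrightarrow> \<forall>i\<in>I. f i \<in> C \<Longrightarrow> asum A f I = vsum_list f xs"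
  unfolding asum_def vsum_list_def[symmetric] using some_distinct_list by (intro vsum_list_perm) auto

lemma asum_empty [simp]: "asum A f {} = vzero"
  using asum_eq_vsum_list[of "{}" "[]" f] by simp

lemma asum_insert:
  assumes "finite I" "i \<notin> I" "f i \<in> C" "\<forall>j\<in>I. f j \<in> C"
  shows "asum A f (insert i I) = vadd (f i) (asum A f I)"
proof -
  obtain xs where "distinct xs" "set xs = I" using assms(1) finite_distinct_list by blast
  then show ?thesis using assms asum_eq_vsum_list[of I xs f] asum_eq_vsum_list[of "insert i I" "i # xs" f]
    by simp
qed

lemma asum_in [simp]: "finite I \<Longrightarrow> \<forall>i\<in>I. f i \<in> C \<Longrightarrow> asum A f I \<in> C"
  by (induction I rule: finite_induct) (auto simp: asum_insert)

lemma asum_cong: "finite I \<Longrightarrow> (\<And>i. i \<in> I \<Longrightarrow> f i = g i) \<Longrightarrow> asum A f I = asum A g I"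
proof -
  assume I: "finite I" and fg: "\<And>i. i \<in> I \<Longrightarrow> f i = g i"
  define xs where "xs = (SOME xs. distinct xs \<and> set xs = I)"
  have "set xs = I" unfolding xs_def using I some_distinct_list by blast
  moreover have "set ys \<subseteq> I \<Longrightarrow>
      foldr (\<lambda>i acc. vadd (f i) acc) ys vzero = foldr (\<lambda>i acc. vadd (g i) acc) ys vzero" for ys
    using fg by (induction ys) auto
  ultimately show ?thesis unfolding asum_def xs_def[symmetric] by simp
qed

lemma asum_neutral: "finite I \<Longrightarrow> (\<And>i. i \<in> I \<Longrightarrow> f i = vzero) \<Longrightarrow> asum A f I = vzero"
proof (induction I rule: finite_induct)
  case (insert i I)
  then show ?case by (simp add: asum_insert)
qed simp

lemma asum_vadd: "finite I \<Longrightarrow> \<forall>i\<in>I. f i \<in> C \<Longrightarrow> \<forall>i\<in>I. g i \<in> C \<Longrightarrow>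
  asum A (\<lambda>i. vadd (f i) (g i)) I = vadd (asum A f I) (asum A g I)"
  by (induction I rule: finite_induct) (auto simp: asum_insert vadd_swap_middle)

lemma asum_vscale: "finite I \<Longrightarrow> \<forall>i\<in>I. f i \<in> C \<Longrightarrow>
  asum A (\<lambda>i. vscale c (f i)) I = vscale c (asum A f I)"
  by (induction I rule: finite_induct) (auto simp: asum_insert vscale_add_right)

lemma asum_vdiff: "finite I \<Longrightarrow> \<forall>i\<in>I. f i \<in> C \<Longrightarrow> \<forall>i\<in>I. g i \<in> C \<Longrightarrow>
  asum A (\<lambda>i. vdiff (f i) (g i)) I = vdiff (asum A f I) (asum A g I)"
  by (simp add: asum_vadd asum_vscale)

lemma asum_union_disjoint:
  "finite I \<Longrightarrow> finite J \<Longrightarrow> I \<inter> J = {} \<Longrightarrow> \<forall>i\<in>I \<union> J. f i \<in> C \<Longrightarrow>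
    asum A f (I \<union> J) = vadd (asum A f I) (asum A f J)"
  by (induction I rule: finite_induct) (auto simp: asum_insert vadd_assoc)

lemma asum_reindex: "finite I \<Longrightarrow> inj_on g I \<Longrightarrow> \<forall>i\<in>I. f (g i) \<in> C \<Longrightarrow>
  asum A f (g ` I) = asum A (\<lambda>i. f (g i)) I"
  by (induction I rule: finite_induct) (auto simp: asum_insert)

lemma asum_mono_neutral_right:
  assumes "finite I" "S \<subseteq> I" "\<forall>i\<in>I. f i \<in> C" "\<And>i. i \<in> I - S \<Longrightarrow> f i = vzero"
  shows "asum A f I = asum A f S"
proof -
  have "finite S" using assms finite_subset by blast
  moreover have "I = S \<union> (I - S)" using assms by auto
  ultimately have "asum A f I = vadd (asum A f S) (asum A f (I - S))"
    using assms asum_union_disjoint[of S "I - S" f] by auto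
  moreover have "asum A f (I - S) = vzero" using assms by (intro asum_neutral) auto
  moreover have "asum A f S \<in> C" using \<open>finite S\<close> assms by (intro asum_in) auto
  ultimately show ?thesis by simp
qed

lemma asum_swap:
  "finite I \<Longrightarrow> finite J \<Longrightarrow> \<forall>i\<in>I. \<forall>j\<in>J. f i j \<in> C \<Longrightarrow>
    asum A (\<lambda>i. asum A (f i) J) I = asum A (\<lambda>j. asum A (\<lambda>i. f i j) I) J"
proof (induction I rule: finite_induct)
  case empty
  then show ?case by (simp add: asum_neutral)
next
  case (insert i I)
  have "asum A (\<lambda>i. asum A (f i) J) (insert i I) = vadd (asum A (f i) J) (asum A (\<lambda>j. asum A (\<lambda>i. f i j) I) J)"
    using insert by (simp add: asum_insert)
  also have "\<dots> = asum A (\<lambda>j. vadd (f i j) (asum A (\<lambda>i. f i j) I)) J"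
    using insert by (intro asum_vadd[symmetric]) auto
  also have "\<dots> = asum A (\<lambda>j. asum A (\<lambda>i. f i j) (insert i I)) J"
    using insert by (intro asum_cong) (auto simp: asum_insert)
  finally show ?case .
qed

end

section \<open>Bilinear operations and locality\<close>

definition binom_sign :: "nat \<Rightarrow> nat \<Rightarrow> 'k::field" where
  "binom_sign N i = of_int ((-1) ^ i * int (N choose i))"

lemma binom_sign_Suc: "binom_sign (Suc N) j = binom_sign N j - (if j = 0 then 0 else binom_sign N (j - 1))"
  by (cases j) (simp_all add: binom_sign_def algebra_simps)

lemma binom_sign_eq_0: "N < j \<Longrightarrow> binom_sign N j = 0"
  by (simp add: binom_sign_def binomial_eq_0)

locale bilin_alg = kvec A for A :: "('b, 'k::field, 'j::finite) alg" +
  assumes op_in [simp]: "\<And>v x y. x \<in> C \<Longrightarrow> y \<in> C \<Longrightarrow> opA A v x y \<in> C"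
    and op_vadd_left: "\<And>v x x' y. x \<in> C \<Longrightarrow> x' \<in> C \<Longrightarrow> y \<in> C \<Longrightarrow>
        opA A v (vadd x x') y = vadd (opA A v x y) (opA A v x' y)"
    and op_vadd_right: "\<And>v x x' y. x \<in> C \<Longrightarrow> x' \<in> C \<Longrightarrow> y \<in> C \<Longrightarrow>
        opA A v y (vadd x x') = vadd (opA A v y x) (opA A v y x')"
    and op_vscale_left: "\<And>v c x y. x \<in> C \<Longrightarrow> y \<in> C \<Longrightarrow> opA A v (vscale c x) y = vscale c (opA A v x y)"
    and op_vscale_right: "\<And>v c x y. x \<in> C \<Longrightarrow> y \<in> C \<Longrightarrow> opA A v x (vscale c y) = vscale c (opA A v x y)"
    and op_label_add: "\<And>v w x y. x \<in> C \<Longrightarrow> y \<in> C \<Longrightarrow>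
        opA A (\<lambda>i. v i + w i) x y = vadd (opA A v x y) (opA A w x y)"
    and op_label_scale: "\<And>v c x y. x \<in> C \<Longrightarrow> y \<in> C \<Longrightarrow> opA A (\<lambda>i. c * v i) x y = vscale c (opA A v x y)"

lemma is_alg_bilin_alg: "is_alg P A \<Longrightarrow> bilin_alg A"
  unfolding bilin_alg_def bilin_alg_axioms_def kvec_def is_alg_def by auto

context bilin_alg
begin

abbreviation "op \<equiv> opA A"

lemma op_zero_left [simp]: "y \<in> C \<Longrightarrow> op v vzero y = vzero"
  using op_vadd_left[of vzero vzero y v] vadd_left_cancel[of "op v vzero y" "op v vzero y" vzero] by simp

lemma op_zero_right [simp]: "y \<in> C \<Longrightarrow> op v y vzero = vzero"
  using op_vadd_right[of vzero vzero y v] vadd_left_cancel[of "op v y vzero" "op v y vzero" vzero] by simp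

lemma op_label_zero [simp]: "x \<in> C \<Longrightarrow> y \<in> C \<Longrightarrow> op (\<lambda>i. 0) x y = vzero"
  using op_label_scale[of x y 0 "\<lambda>i. 0"] by simp

lemma op_vdiff_left: "x \<in> C \<Longrightarrow> x' \<in> C \<Longrightarrow> y \<in> C \<Longrightarrow> op v (vdiff x x') y = vdiff (op v x y) (op v x' y)"
  by (simp add: op_vadd_left op_vscale_left)

lemma op_vdiff_right: "x \<in> C \<Longrightarrow> x' \<in> C \<Longrightarrow> y \<in> C \<Longrightarrow> op v y (vdiff x x') = vdiff (op v y x) (op v y x')"
  by (simp add: op_vadd_right op_vscale_right)

lemma op_label_sum: "finite J \<Longrightarrow> x \<in> C \<Longrightarrow> y \<in> C \<Longrightarrow>
  op (\<lambda>i. \<Sum>j\<in>J. F j i) x y = asum A (\<lambda>j. op (F j) x y) J"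
proof (induction J rule: finite_induct)
  case (insert j J)
  then have "op (\<lambda>i. \<Sum>j\<in>insert j J. F j i) x y = vadd (op (F j) x y) (op (\<lambda>i. \<Sum>j\<in>J. F j i) x y)"
    using op_label_add[of x y "F j"] by simp
  then show ?case using insert by (simp add: asum_insert)
qed simp

lemma op_basis_expand: "x \<in> C \<Longrightarrow> y \<in> C \<Longrightarrow> op v x y = asum A (\<lambda>j. vscale (v j) (op (bvec j) x y)) UNIV"
proof -
  assume xy: "x \<in> C" "y \<in> C"
  have "v = (\<lambda>i. \<Sum>j\<in>UNIV. v j * bvec j i)"
    by (auto simp: bvec_def if_distrib cong: if_cong)
  then have "op v x y = op (\<lambda>i. \<Sum>j\<in>UNIV. v j * bvec j i) x y" by simp
  also have "\<dots> = asum A (\<lambda>j. vscale (v j) (op (bvec j) x y)) UNIV"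
    using xy by (simp add: op_label_sum op_label_scale)
  finally show ?thesis .
qed

lemma loc_coef_eq: "loc_coef A v a b N m n =
    asum A (\<lambda>i. vscale (binom_sign N i) (op v (a (m + int N - int i)) (b (n + int i)))) {0..N}"
  by (simp add: loc_coef_def binom_sign_def)

lemma nprod_eq: "nprod A v N a b m =
    asum A (\<lambda>i. vscale (binom_sign N i) (op v (a (int N - int i)) (b (m + int i)))) {0..N}"
  by (simp add: nprod_def binom_sign_def)

lemma distr_nprod: "distr A a \<Longrightarrow> distr A b \<Longrightarrow> distr A (nprod A v N a b)"
  unfolding distr_def nprod_eq by simp

lemma loc_coef_Suc:
  assumes a: "distr A a" and b: "distr A b"
  shows "loc_coef A v a b (Suc N) m n = vdiff (loc_coef A v a b N (m + 1) n) (loc_coef A v a b N m (n + 1))"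
proof -
  define T where "T j = op v (a (m + int (Suc N) - int j)) (b (n + int j))" for j
  have TC: "T j \<in> C" for j using a b by (simp add: T_def distr_def)
  have e1: "loc_coef A v a b N (m + 1) n = asum A (\<lambda>j. vscale (binom_sign N j) (T j)) {0..Suc N}"
  proof -
    have "loc_coef A v a b N (m + 1) n = asum A (\<lambda>j. vscale (binom_sign N j) (T j)) {0..N}"
      unfolding loc_coef_eq T_def by (intro asum_cong) (auto simp: algebra_simps)
    also have "\<dots> = asum A (\<lambda>j. vscale (binom_sign N j) (T j)) {0..Suc N}"
      using TC by (intro asum_mono_neutral_right[symmetric]) (auto simp: binom_sign_eq_0)
    finally show ?thesis .
  qed
  define c' :: "nat \<Rightarrow> 'k" where "c' j = (if j = 0 then 0 else binom_sign N (j - 1))" for j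
  have e2: "loc_coef A v a b N m (n + 1) = asum A (\<lambda>j. vscale (c' j) (T j)) {0..Suc N}"
  proof -
    have "loc_coef A v a b N m (n + 1) = asum A (\<lambda>i. vscale (binom_sign N i) (T (Suc i))) {0..N}"
      unfolding loc_coef_eq T_def by (intro asum_cong) (auto simp: algebra_simps)
    also have "\<dots> = asum A (\<lambda>j. vscale (c' j) (T j)) (Suc ` {0..N})"
      using TC by (subst asum_reindex) (auto simp: c'_def)
    also have "\<dots> = asum A (\<lambda>j. vscale (c' j) (T j)) {0..Suc N}"
    proof (intro asum_mono_neutral_right[symmetric])
      fix i assume "i \<in> {0..Suc N} - Suc ` {0..N}"
      then have "i = 0" by (cases i) auto
      then show "vscale (c' i) (T i) = vzero" using TC by (simp add: c'_def)
    qed (use TC in auto)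
    finally show ?thesis .
  qed
  have "vdiff (loc_coef A v a b N (m + 1) n) (loc_coef A v a b N m (n + 1)) =
      asum A (\<lambda>j. vdiff (vscale (binom_sign N j) (T j)) (vscale (c' j) (T j))) {0..Suc N}"
    unfolding e1 e2 using TC by (intro asum_vdiff[symmetric]) auto
  also have "\<dots> = asum A (\<lambda>j. vscale (binom_sign (Suc N) j) (T j)) {0..Suc N}"
    using TC by (intro asum_cong) (auto simp: vscale_vdiff_left binom_sign_Suc c'_def)
  finally show ?thesis unfolding loc_coef_eq T_def by simp
qed

lemma loc_coef_zero_mono:
  assumes "distr A a" "distr A b" "\<forall>m n. loc_coef A v a b N m n = vzero" "N \<le> N'"
  shows "\<forall>m n. loc_coef A v a b N' m n = vzero"
proof -
  have "\<forall>m n. loc_coef A v a b (N + k) m n = vzero" for k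
    by (induction k) (use assms loc_coef_Suc[OF assms(1,2), of v] in auto)
  then show ?thesis using assms(4) le_Suc_ex by blast
qed

lemma local_op_eventually:
  "local_op A v a b \<Longrightarrow> distr A a \<Longrightarrow> distr A b \<Longrightarrow> \<exists>N. \<forall>N'\<ge>N. \<forall>m n. loc_coef A v a b N' m n = vzero"
  unfolding local_op_def using loc_coef_zero_mono by blast

lemma loc_coef_label_add: "distr A a \<Longrightarrow> distr A b \<Longrightarrow>
  loc_coef A (\<lambda>i. v i + w i) a b N m n = vadd (loc_coef A v a b N m n) (loc_coef A w a b N m n)"
  unfolding loc_coef_eq distr_def by (simp add: op_label_add vscale_add_right asum_vadd[symmetric])

lemma loc_coef_vadd_left: "distr A a \<Longrightarrow> distr A a' \<Longrightarrow> distr A b \<Longrightarrow>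
  loc_coef A v (\<lambda>s. vadd (a s) (a' s)) b N m n = vadd (loc_coef A v a b N m n) (loc_coef A v a' b N m n)"
  unfolding loc_coef_eq distr_def by (simp add: op_vadd_left vscale_add_right asum_vadd[symmetric])

lemma loc_coef_vadd_right: "distr A a \<Longrightarrow> distr A b \<Longrightarrow> distr A b' \<Longrightarrow>
  loc_coef A v a (\<lambda>s. vadd (b s) (b' s)) N m n = vadd (loc_coef A v a b N m n) (loc_coef A v a b' N m n)"
  unfolding loc_coef_eq distr_def by (simp add: op_vadd_right vscale_add_right asum_vadd[symmetric])

lemma local_op_label_add:
  assumes "distr A a" "distr A b" "local_op A v a b" "local_op A w a b"
  shows "local_op A (\<lambda>i. v i + w i) a b"
proof -
  obtain N1 N2 where "\<forall>N'\<ge>N1. \<forall>m n. loc_coef A v a b N' m n = vzero"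
    and "\<forall>N'\<ge>N2. \<forall>m n. loc_coef A w a b N' m n = vzero"
    using assms local_op_eventually by metis
  then have "\<forall>m n. loc_coef A (\<lambda>i. v i + w i) a b (N1 + N2) m n = vzero"
    using assms by (simp add: loc_coef_label_add)
  then show ?thesis unfolding local_op_def by blast
qed

lemma local_op_vadd_left:
  assumes "distr A a" "distr A a'" "distr A b" "local_op A v a b" "local_op A v a' b"
  shows "local_op A v (\<lambda>s. vadd (a s) (a' s)) b"
proof -
  obtain N1 N2 where "\<forall>N'\<ge>N1. \<forall>m n. loc_coef A v a b N' m n = vzero"
    and "\<forall>N'\<ge>N2. \<forall>m n. loc_coef A v a' b N' m n = vzero"
    using assms local_op_eventually by metis
  then have "\<forall>m n. loc_coef A v (\<lambda>s. vadd (a s) (a' s)) b (N1 + N2) m n = vzero"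
    using assms by (simp add: loc_coef_vadd_left)
  then show ?thesis unfolding local_op_def by blast
qed

lemma local_op_vadd_right:
  assumes "distr A a" "distr A b" "distr A b'" "local_op A v a b" "local_op A v a b'"
  shows "local_op A v a (\<lambda>s. vadd (b s) (b' s))"
proof -
  obtain N1 N2 where "\<forall>N'\<ge>N1. \<forall>m n. loc_coef A v a b N' m n = vzero"
    and "\<forall>N'\<ge>N2. \<forall>m n. loc_coef A v a b' N' m n = vzero"
    using assms local_op_eventually by metis
  then have "\<forall>m n. loc_coef A v a (\<lambda>s. vadd (b s) (b' s)) (N1 + N2) m n = vzero"
    using assms by (simp add: loc_coef_vadd_right)
  then show ?thesis unfolding local_op_def by blast
qed

lemma local_op_label_sum:
  "finite J \<Longrightarrow> distr A a \<Longrightarrow> distr A b \<Longrightarrow> \<forall>j\<in>J. local_op A (V j) a b \<Longrightarrow>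
    local_op A (\<lambda>i. \<Sum>j\<in>J. V j i) a b"
proof (induction J rule: finite_induct)
  case empty
  then show ?case unfolding local_op_def loc_coef_eq distr_def by (simp add: asum_neutral)
next
  case (insert j J)
  then show ?case using local_op_label_add[of a b "V j" "\<lambda>i. \<Sum>j\<in>J. V j i"] by simp
qed

lemma distr_asum: "finite J \<Longrightarrow> \<forall>j\<in>J. distr A (d j) \<Longrightarrow> distr A (\<lambda>s. asum A (\<lambda>j. d j s) J)"
  by (simp add: distr_def)

lemma local_op_sum_left:
  "finite J \<Longrightarrow> distr A c \<Longrightarrow> \<forall>j\<in>J. distr A (d j) \<and> local_op A v (d j) c \<Longrightarrow>
    local_op A v (\<lambda>s. asum A (\<lambda>j. d j s) J) c"
proof (induction J rule: finite_induct)
  case empty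
  then show ?case unfolding local_op_def loc_coef_eq distr_def by (simp add: asum_neutral)
next
  case (insert j J)
  have "(\<lambda>s. asum A (\<lambda>j. d j s) (insert j J)) = (\<lambda>s. vadd (d j s) (asum A (\<lambda>j. d j s) J))"
    using insert by (auto simp: asum_insert distr_def)
  then show ?case using insert by (simp add: local_op_vadd_left distr_asum)
qed

lemma local_op_sum_right:
  "finite J \<Longrightarrow> distr A c \<Longrightarrow> \<forall>j\<in>J. distr A (d j) \<and> local_op A v c (d j) \<Longrightarrow>
    local_op A v c (\<lambda>s. asum A (\<lambda>j. d j s) J)"
proof (induction J rule: finite_induct)
  case empty
  then show ?case unfolding local_op_def loc_coef_eq distr_def by (simp add: asum_neutral)
next
  case (insert j J)
  have "(\<lambda>s. asum A (\<lambda>j. d j s) (insert j J)) = (\<lambda>s. vadd (d j s) (asum A (\<lambda>j. d j s) J))"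
    using insert by (auto simp: asum_insert distr_def)
  then show ?case using insert by (simp add: local_op_vadd_right distr_asum)
qed

lemma nprod_label_sum: "finite J \<Longrightarrow> distr A a \<Longrightarrow> distr A b \<Longrightarrow>
  nprod A (\<lambda>i. \<Sum>j\<in>J. V j i) n a b = (\<lambda>s. asum A (\<lambda>j. nprod A (V j) n a b s) J)"
proof
  fix s
  assume J: "finite J" and d: "distr A a" "distr A b"
  let ?t = "\<lambda>j i. vscale (binom_sign n i) (op (V j) (a (int n - int i)) (b (s + int i)))"
  have "nprod A (\<lambda>i. \<Sum>j\<in>J. V j i) n a b s = asum A (\<lambda>i. asum A (\<lambda>j. ?t j i) J) {0..n}"
    unfolding nprod_eq using J d by (intro asum_cong) (auto simp: op_label_sum asum_vscale distr_def)
  also have "\<dots> = asum A (\<lambda>j. asum A (?t j) {0..n}) J"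
    using J d by (intro asum_swap) (auto simp: distr_def)
  finally show "nprod A (\<lambda>i. \<Sum>j\<in>J. V j i) n a b s = asum A (\<lambda>j. nprod A (V j) n a b s) J"
    unfolding nprod_eq .
qed

end

section \<open>Transport of algebras along injections\<close>

definition map_alg :: "('c \<Rightarrow> 'b) \<Rightarrow> ('c, 'k, 'o) alg \<Rightarrow> ('b, 'k, 'o) alg" where
  "map_alg g B = \<lparr>carr = g ` carr B, addA = (\<lambda>x y. g (addA B (inv g x) (inv g y))), zeroA = g (zeroA B),
     scaleA = (\<lambda>c x. g (scaleA B c (inv g x))), opA = (\<lambda>v x y. g (opA B v (inv g x) (inv g y)))\<rparr>"

lemma map_alg_simps [simp]:
  "carr (map_alg g B) = g ` carr B"
  "addA (map_alg g B) x y = g (addA B (inv g x) (inv g y))"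
  "zeroA (map_alg g B) = g (zeroA B)"
  "scaleA (map_alg g B) c x = g (scaleA B c (inv g x))"
  "opA (map_alg g B) v x y = g (opA B v (inv g x) (inv g y))"
  by (simp_all add: map_alg_def)

lemma asum_map_alg: "inj g \<Longrightarrow> asum (map_alg g B) (\<lambda>i. g (f i)) I = g (asum B f I)"
proof -
  assume g: "inj g"
  have "foldr (\<lambda>i acc. addA (map_alg g B) (g (f i)) acc) xs (zeroA (map_alg g B)) =
      g (foldr (\<lambda>i acc. addA B (f i) acc) xs (zeroA B))" for xs
    by (induction xs) (simp_all add: g)
  then show ?thesis unfolding asum_def .
qed

lemma eval3_map_alg:
  assumes g: "inj g"
  shows "eval3 (map_alg g B) r x = g (eval3 B r (\<lambda>i. inv g (x i)))"
proof -
  define F where "F = (\<lambda>(\<mu>, \<nu>, a, b, c). scaleA B (r (\<mu>, \<nu>, a, b, c))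
      (opA B (bvec \<mu>) (opA B (bvec \<nu>) (inv g (x a)) (inv g (x b))) (inv g (x c))))"
  have "eval3 (map_alg g B) r x = asum (map_alg g B) (\<lambda>m. g (F m)) UNIV"
    unfolding eval3_def F_def by (rule arg_cong[of _ _ "\<lambda>h. asum _ h UNIV"]) (auto simp: g)
  also have "\<dots> = g (asum B F UNIV)" by (rule asum_map_alg[OF g])
  finally show ?thesis unfolding eval3_def F_def .
qed

lemma is_alg_map_alg:
  assumes g: "inj g" and B: "is_alg P B"
  shows "is_alg P (map_alg g B)"
proof -
  have rel: "eval3 (map_alg g B) r x = zeroA (map_alg g B)"
    if r: "r \<in> snd P" and x: "\<forall>i. x i \<in> g ` carr B" for r x
  proof -
    have "\<forall>i. inv g (x i) \<in> carr B" using x g by (metis image_iff inv_f_f)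
    then show ?thesis using B r by (simp add: eval3_map_alg[OF g] is_alg_def)
  qed
  show ?thesis using B rel unfolding is_alg_def kvs_def by (auto simp: g)
qed

lemma loc_coef_map_alg: "inj g \<Longrightarrow>
  loc_coef (map_alg g B) v (\<lambda>s. g (a s)) (\<lambda>s. g (b s)) N m n = g (loc_coef B v a b N m n)"
  unfolding loc_coef_def by (simp add: asum_map_alg[symmetric])

lemma local_map_alg: "inj g \<Longrightarrow> local (map_alg g B) (\<lambda>s. g (a s)) (\<lambda>s. g (b s)) = local B a b"
  unfolding local_def local_op_def by (simp add: loc_coef_map_alg inj_eq)

lemma nprod_map_alg:
  "inj g \<Longrightarrow> nprod (map_alg g B) v n (\<lambda>s. g (a s)) (\<lambda>s. g (b s)) = (\<lambda>s. g (nprod B v n a b s))"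
  unfolding nprod_def by (simp add: asum_map_alg[symmetric])

lemma dong_alg_of_dong_map_alg:
  assumes g: "inj g" and D: "dong_alg (map_alg g B)"
  shows "dong_alg B"
  unfolding dong_alg_def
proof (intro allI impI)
  fix a b c n v
  assume "distr B a \<and> distr B b \<and> distr B c \<and> local B a b \<and> local B b c \<and> local B a c"
  then have "local (map_alg g B) (nprod (map_alg g B) v n (\<lambda>s. g (a s)) (\<lambda>s. g (b s))) (\<lambda>s. g (c s))"
    using D unfolding dong_alg_def by (simp add: distr_def local_map_alg g)
  then show "local B (nprod B v n a b) c" by (simp add: nprod_map_alg local_map_alg g)
qed

section \<open>Hadamard products with Perm and ComTriAs\<close>

definition label_emb :: "'l \<Rightarrow> ('o \<Rightarrow> 'k::field) \<Rightarrow> ('o \<times> 'l \<Rightarrow> 'k)" where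
  "label_emb l v = (\<lambda>(\<mu>, p). if p = l then v \<mu> else 0)"

lemma label_emb_bvec: "label_emb l (bvec \<mu>) = bvec (\<mu>, l)"
  by (auto simp: label_emb_def bvec_def)

lemma label_emb_add: "label_emb l (\<lambda>i. v i + w i) = (\<lambda>j. label_emb l v j + label_emb l w j)"
  by (auto simp: label_emb_def)

lemma label_emb_scale: "label_emb l (\<lambda>i. c * v i) = (\<lambda>j. c * label_emb l v j)"
  by (auto simp: label_emb_def)

lemma label_emb_basis_sum:
  fixes v :: "'o::finite \<Rightarrow> 'k::field"
  shows "label_emb l v = (\<lambda>i. \<Sum>\<mu>\<in>UNIV. v \<mu> * bvec (\<mu>, l) i)"
  by (auto simp: label_emb_def bvec_def if_distrib cong: if_cong)

lemma label_decomp: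
  fixes w :: "'o \<times> 'l::finite \<Rightarrow> 'k::field"
  shows "w = (\<lambda>i. \<Sum>l\<in>UNIV. label_emb l (\<lambda>\<mu>. w (\<mu>, l)) i)"
  by (auto simp: label_emb_def sum.delta)

lemma tauV_had_tau_label_emb:
  fixes tau :: "'o::finite \<Rightarrow> 'o \<Rightarrow> 'k::field" and swp :: "'l::finite \<Rightarrow> 'l"
  shows "tauV (had_tau swp tau) (label_emb l v) = label_emb (swp l) (tauV tau v)"
proof
  fix j :: "'o \<times> 'l"
  obtain \<nu> q where j: "j = (\<nu>, q)" by fastforce
  have "tauV (had_tau swp tau) (label_emb l v) (\<nu>, q) =
      (\<Sum>\<mu>\<in>UNIV. \<Sum>p\<in>UNIV. label_emb l v (\<mu>, p) * had_tau swp tau (\<mu>, p) (\<nu>, q))"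
    unfolding tauV_def by (simp add: sum.cartesian_product flip: UNIV_Times_UNIV)
  also have "\<dots> = (\<Sum>\<mu>\<in>UNIV. \<Sum>p\<in>UNIV. if p = l then v \<mu> * (tau \<mu> \<nu> * (if q = swp l then 1 else 0)) else 0)"
    by (intro sum.cong refl) (auto simp: label_emb_def had_tau_def)
  also have "\<dots> = label_emb (swp l) (tauV tau v) (\<nu>, q)"
    by (simp add: label_emb_def tauV_def sum_distrib_right sum.delta)
  finally show "tauV (had_tau swp tau) (label_emb l v) j = label_emb (swp l) (tauV tau v) j"
    using j by simp
qed

lemma zero_in_ideal3: "(\<lambda>m. 0) \<in> ideal3 P"
  unfolding ideal3_def fspan_def by (intro CollectI exI[of _ "{}"]) simp

lemma rel_in_ideal3:
  assumes r: "r \<in> snd P"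
  shows "r \<in> ideal3 P"
proof -
  have "act3 id r = r" by (auto simp: act3_def)
  then have "r \<in> {act3 \<sigma> r | \<sigma> r. bij \<sigma> \<and> r \<in> snd P}" using r by (metis (mono_tags, lifting) CollectI bij_id)
  then show ?thesis unfolding ideal3_def fspan_def
    by (intro CollectI exI[of _ "{r}"] exI[of _ "\<lambda>f. 1"]) auto
qed

lemma dist3_covers: "dist3 a b c \<Longrightarrow> i = a \<or> i = b \<or> i = c"
  by (cases i; cases a; cases b; cases c) (auto simp: dist3_def)

text \<open>A marking S is the set of arguments of a monomial \<open>\<mu>(\<nu>(x\<^sub>a, x\<^sub>b), x\<^sub>c)\<close> taken from
  the summand A of hat A (the others from A/I); the monomial then evaluates in A with the labels
  \<open>tree_labels lL lR lB S a b c\<close>. Without a label lB marking both inputs, only one argument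
  can come from A.\<close>

definition markings :: "'l option \<Rightarrow> v3 set set" where
  "markings lB = {S. S \<noteq> {} \<and> (lB = None \<longrightarrow> card S = 1)}"

definition inner_label :: "'l \<Rightarrow> 'l \<Rightarrow> 'l option \<Rightarrow> v3 set \<Rightarrow> v3 \<Rightarrow> v3 \<Rightarrow> 'l" where
  "inner_label lL lR lB S a b = (if a \<in> S \<and> b \<in> S then the lB else if a \<in> S then lL else lR)"

definition tree_labels :: "'l \<Rightarrow> 'l \<Rightarrow> 'l option \<Rightarrow> v3 set \<Rightarrow> v3 \<Rightarrow> v3 \<Rightarrow> v3 \<Rightarrow> 'l \<times> 'l" where
  "tree_labels lL lR lB S a b c =
    (if c \<notin> S then (lL, inner_label lL lR lB S a b)
     else if a \<notin> S \<and> b \<notin> S then (lR, lL) else (the lB, inner_label lL lR lB S a b))"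

definition marking :: "v3 \<Rightarrow> v3 \<Rightarrow> v3 \<Rightarrow> bool \<times> bool \<times> bool \<Rightarrow> v3 set" where
  "marking a b c M = {i. (i = a \<and> fst M) \<or> (i = b \<and> fst (snd M)) \<or> (i = c \<and> snd (snd M))}"

definition marking_codes :: "'l option \<Rightarrow> (bool \<times> bool \<times> bool) set" where
  "marking_codes lB = (case lB of
      None \<Rightarrow> {(True, False, False), (False, True, False), (False, False, True)}
    | Some l \<Rightarrow> {(True, False, False), (False, True, False), (True, True, False), (False, False, True),
                (True, False, True), (False, True, True), (True, True, True)})"

lemma marking_members:
  assumes d: "dist3 a b c"
  shows "S = marking a b c (a \<in> S, b \<in> S, c \<in> S)"
proof (rule set_eqI)
  fix i
  show "i \<in> S \<longleftrightarrow> i \<in> marking a b c (a \<in> S, b \<in> S, c \<in> S)"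
    using dist3_covers[OF d, of i] d by (auto simp: marking_def dist3_def)
qed

lemma inj_on_marking: "dist3 a b c \<Longrightarrow> inj_on (marking a b c) M"
  unfolding inj_on_def marking_def dist3_def by (auto simp: set_eq_iff)

lemma markings_eq_image:
  assumes d: "dist3 a b c"
  shows "markings lB = marking a b c ` marking_codes lB"
proof (cases lB)
  case None
  have "markings lB = {{a}, {b}, {c}}"
    unfolding markings_def using None dist3_covers[OF d] by (auto simp: card_1_singleton_iff)
  moreover have "marking a b c ` marking_codes lB = {{a}, {b}, {c}}"
    using None d by (auto simp: marking_codes_def marking_def dist3_def)
  ultimately show ?thesis by simp
next
  case (Some l)
  show ?thesis
  proof (rule set_eqI, rule iffI)
    fix S assume "S \<in> markings lB"
    then obtain x where "x \<in> S" by (auto simp: markings_def)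
    then have "a \<in> S \<or> b \<in> S \<or> c \<in> S" using dist3_covers[OF d, of x] by auto
    then have "(a \<in> S, b \<in> S, c \<in> S) \<in> marking_codes lB"
      using Some by (cases "a \<in> S"; cases "b \<in> S"; cases "c \<in> S") (auto simp: marking_codes_def)
    then show "S \<in> marking a b c ` marking_codes lB" using marking_members[OF d, of S] by blast
  qed (use Some in \<open>auto simp: marking_codes_def markings_def marking_def\<close>)
qed

section \<open>The P-algebra hat A of a replicated algebra\<close>

text \<open>The Hadamard factor is a binary set operad Q with composition \<open>sel\<close> and transposition
  \<open>swp\<close>; \<open>lL\<close> and \<open>lR\<close> are the elements of Q(2) marking the left and the right input, \<open>lB\<close>
  the one marking both (if any), and \<open>sig S\<close> is the element of Q(3) marking the variables in S.\<close>

locale replication =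
  fixes P :: "('o::finite, 'k::field) bqop"
    and sel :: "'l::finite \<Rightarrow> 'l \<Rightarrow> v3 \<Rightarrow> v3 \<Rightarrow> v3 \<Rightarrow> 's"
    and swp :: "'l \<Rightarrow> 'l"
    and lL lR :: 'l and lB :: "'l option"
    and sig :: "v3 set \<Rightarrow> 's"
    and A :: "('a, 'k, 'o \<times> 'l) alg"
  assumes alg: "is_alg (had_tau swp (fst P), had_rel P sel) A"
    and bq: "bq_operad P"
    and sel_lR: "\<And>q q' a b c. sel lR q a b c = sel lR q' a b c"
    and swp_lL: "swp lL = lR" and swp_lR: "swp lR = lL"
    and swp_lB: "\<And>l. lB = Some l \<Longrightarrow> swp l = l"
    and lL_neq_lR: "lL \<noteq> lR"
    and labels_UNIV: "UNIV = {lL, lR} \<union> set_option lB"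
    and sel_tree_labels: "\<And>S a b c. S \<in> markings lB \<Longrightarrow> dist3 a b c \<Longrightarrow>
        sel (fst (tree_labels lL lR lB S a b c)) (snd (tree_labels lL lR lB S a b c)) a b c = sig S"
begin

sublocale bilin_alg A
  using alg by (rule is_alg_bilin_alg)

abbreviation "tau \<equiv> had_tau swp (fst P)"

lemma op_tau: "x \<in> C \<Longrightarrow> y \<in> C \<Longrightarrow> op (tauV tau v) x y = op v y x"
  using alg by (simp add: is_alg_def)

lemma eval3_had_rel: "r \<in> had_rel P sel \<Longrightarrow> \<forall>i. x i \<in> C \<Longrightarrow> eval3 A r x = vzero"
  using alg by (simp add: is_alg_def)

lemma op_label_emb: "x \<in> C \<Longrightarrow> y \<in> C \<Longrightarrow>
  op (label_emb l v) x y = asum A (\<lambda>\<mu>. vscale (v \<mu>) (op (bvec (\<mu>, l)) x y)) UNIV"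
  by (subst label_emb_basis_sum) (simp add: op_label_sum op_label_scale)

definition vars3 :: "'a \<Rightarrow> 'a \<Rightarrow> 'a \<Rightarrow> v3 \<Rightarrow> 'a" where
  "vars3 x y w = (\<lambda>i. case i of X1 \<Rightarrow> x | X2 \<Rightarrow> y | X3 \<Rightarrow> w)"

lemma vars3_in: "x \<in> C \<Longrightarrow> y \<in> C \<Longrightarrow> w \<in> C \<Longrightarrow> \<forall>i. vars3 x y w i \<in> C"
  by (auto simp: vars3_def split: v3.split)

lemma had_rel_binomial:
  assumes "sel p q X1 X2 X3 = sel p' q' X1 X2 X3"
  shows "(\<lambda>m. emono ((\<mu>, p), (\<nu>, q), X1, X2, X3) m - emono ((\<mu>, p'), (\<nu>, q'), X1, X2, X3) m) \<in> had_rel P sel"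
  unfolding had_rel_def
proof (intro CollectI conjI allI impI)
  fix \<mu>0 \<nu>0 a b c assume "\<not> dist3 a b c"
  then show "emono ((\<mu>, p), (\<nu>, q), X1, X2, X3) (\<mu>0, \<nu>0, a, b, c) -
      emono ((\<mu>, p'), (\<nu>, q'), X1, X2, X3) (\<mu>0, \<nu>0, a, b, c) = (0::'k)"
    by (auto simp: emono_def dist3_def)
next
  fix s
  have "(\<Sum>pq\<in>{pq. sel (fst pq) (snd pq) a b c = s}. emono ((\<mu>, p), (\<nu>, q), X1, X2, X3) ((\<mu>0, fst pq), (\<nu>0, snd pq), a, b, c)
      - emono ((\<mu>, p'), (\<nu>, q'), X1, X2, X3) ((\<mu>0, fst pq), (\<nu>0, snd pq), a, b, c)) = (0::'k)" for \<mu>0 \<nu>0 a b c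
  proof (cases "(\<mu>0, \<nu>0, a, b, c) = (\<mu>, \<nu>, X1, X2, X3)")
    case True
    let ?S = "{pq. sel (fst pq) (snd pq) a b c = s}"
    have "(\<Sum>pq\<in>?S. emono ((\<mu>, p), (\<nu>, q), X1, X2, X3) ((\<mu>0, fst pq), (\<nu>0, snd pq), a, b, c)
        - emono ((\<mu>, p'), (\<nu>, q'), X1, X2, X3) ((\<mu>0, fst pq), (\<nu>0, snd pq), a, b, c)) =
        (\<Sum>pq\<in>?S. (if pq = (p, q) then 1 else 0) - (if pq = (p', q') then 1 else 0))"
      using True by (intro sum.cong refl) (auto simp: emono_def)
    also have "\<dots> = 0" using True assms by (simp add: sum_subtractf sum.delta)
    finally show ?thesis .
  qed (auto intro!: sum.neutral simp: emono_def)
  then show "(\<lambda>(\<mu>0, \<nu>0, a, b, c). \<Sum>pq\<in>{pq. sel (fst pq) (snd pq) a b c = s}.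
      emono ((\<mu>, p), (\<nu>, q), X1, X2, X3) ((\<mu>0, fst pq), (\<nu>0, snd pq), a, b, c) -
      emono ((\<mu>, p'), (\<nu>, q'), X1, X2, X3) ((\<mu>0, fst pq), (\<nu>0, snd pq), a, b, c)) \<in> ideal3 P"
    using zero_in_ideal3 by (simp add: case_prod_beta')
qed

lemma op_op_eq_if_sel_eq:
  assumes xyw: "x \<in> C" "y \<in> C" "w \<in> C"
    and sel_eq: "sel p q X1 X2 X3 = sel p' q' X1 X2 X3"
  shows "op (bvec (\<mu>, p)) (op (bvec (\<nu>, q)) x y) w = op (bvec (\<mu>, p')) (op (bvec (\<nu>, q')) x y) w"
proof (cases "(p, q) = (p', q')")
  case False
  define m1 where "m1 = ((\<mu>, p), (\<nu>, q), X1, X2, X3)"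
  define m2 where "m2 = ((\<mu>, p'), (\<nu>, q'), X1, X2, X3)"
  define r :: "('o \<times> 'l) \<times> ('o \<times> 'l) \<times> v3 \<times> v3 \<times> v3 \<Rightarrow> 'k" where "r m = emono m1 m - emono m2 m" for m
  have m12: "m1 \<noteq> m2" using False by (auto simp: m1_def m2_def)
  let ?x = "vars3 x y w"
  let ?t = "\<lambda>(\<mu>, \<nu>, a, b, c). vscale (r (\<mu>, \<nu>, a, b, c)) (op (bvec \<mu>) (op (bvec \<nu>) (?x a) (?x b)) (?x c))"
  have xC: "\<forall>i. ?x i \<in> C" using vars3_in xyw by blast
  have "r \<in> had_rel P sel"
    using had_rel_binomial[OF sel_eq] unfolding r_def m1_def m2_def .
  then have "vzero = eval3 A r ?x" using eval3_had_rel xC by simp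
  also have "\<dots> = asum A ?t {m1, m2}"
    unfolding eval3_def using xC
    by (intro asum_mono_neutral_right) (auto simp: r_def emono_def split: prod.split)
  also have "\<dots> = vdiff (op (bvec (\<mu>, p)) (op (bvec (\<nu>, q)) x y) w) (op (bvec (\<mu>, p')) (op (bvec (\<nu>, q')) x y) w)"
    using m12 xyw xC by (simp add: asum_insert r_def emono_def m1_def m2_def vars3_def)
  finally show ?thesis using xyw vdiff_eq_zero_iff by (metis op_in)
qed simp

lemma op_lR_inner_label_irrelevant: "x \<in> C \<Longrightarrow> y \<in> C \<Longrightarrow> w \<in> C \<Longrightarrow>
  op (bvec (\<mu>, lR)) (op (bvec (\<nu>, q)) x y) w = op (bvec (\<mu>, lR)) (op (bvec (\<nu>, lL)) x y) w"
  using sel_lR by (intro op_op_eq_if_sel_eq) auto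

inductive_set label_ideal :: "'a set" where
  gen: "x \<in> C \<Longrightarrow> y \<in> C \<Longrightarrow> vdiff (op (bvec (\<mu>, p)) x y) (op (bvec (\<mu>, lL)) x y) \<in> label_ideal"
| zero: "vzero \<in> label_ideal"
| add: "i \<in> label_ideal \<Longrightarrow> j \<in> label_ideal \<Longrightarrow> vadd i j \<in> label_ideal"
| scale: "i \<in> label_ideal \<Longrightarrow> vscale c i \<in> label_ideal"

lemma label_ideal_in: "i \<in> label_ideal \<Longrightarrow> i \<in> C"
  by (induction rule: label_ideal.induct) auto

lemma label_ideal_vdiff: "i \<in> label_ideal \<Longrightarrow> j \<in> label_ideal \<Longrightarrow> vdiff i j \<in> label_ideal"
  by (intro label_ideal.add label_ideal.scale)

lemma label_ideal_asum: "finite I \<Longrightarrow> \<forall>i\<in>I. f i \<in> label_ideal \<Longrightarrow> asum A f I \<in> label_ideal"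
  by (induction I rule: finite_induct) (auto simp: asum_insert label_ideal_in intro: label_ideal.intros)

lemma label_diff_in_ideal:
  assumes "x \<in> C" "y \<in> C"
  shows "vdiff (op (bvec (\<mu>, p)) x y) (op (bvec (\<mu>, p')) x y) \<in> label_ideal"
  using label_ideal_vdiff[OF label_ideal.gen[OF assms, of \<mu> p] label_ideal.gen[OF assms, of \<mu> p']] assms
  by (simp add: vdiff_vdiff_same)

lemma op_lR_ideal_left: "i \<in> label_ideal \<Longrightarrow> w \<in> C \<Longrightarrow> op (bvec (\<mu>, lR)) i w = vzero"
proof (induction rule: label_ideal.induct)
  case (gen x y \<nu> p)
  then show ?case by (simp add: op_vdiff_left op_lR_inner_label_irrelevant[of x y w \<mu> \<nu> p])
qed (simp_all add: label_ideal_in op_vadd_left op_vscale_left)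

lemma op_label_emb_lR_ideal_left: "i \<in> label_ideal \<Longrightarrow> w \<in> C \<Longrightarrow> op (label_emb lR v) i w = vzero"
  by (simp add: label_ideal_in op_label_emb op_lR_ideal_left asum_neutral)

lemma op_label_emb_lL_ideal_right: "i \<in> label_ideal \<Longrightarrow> w \<in> C \<Longrightarrow> op (label_emb lL v) w i = vzero"
  using op_tau[of i w "label_emb lL v"] op_label_emb_lR_ideal_left[of i w "tauV (fst P) v"]
  by (simp add: label_ideal_in tauV_had_tau_label_emb swp_lL)

lemma label_ideal_op_basis_left: "i \<in> label_ideal \<Longrightarrow> w \<in> C \<Longrightarrow> op (bvec j) i w \<in> label_ideal"
proof (induction rule: label_ideal.induct)
  case (gen x y \<nu> p)
  obtain \<mu>' p' where j: "j = (\<mu>', p')" by fastforce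
  define t1 where "t1 = op (bvec (\<nu>, p)) x y"
  define t2 where "t2 = op (bvec (\<nu>, lL)) x y"
  have t: "t1 \<in> C" "t2 \<in> C" using gen by (auto simp: t1_def t2_def)
  have "op (bvec (\<mu>', lR)) t1 w = op (bvec (\<mu>', lR)) t2 w"
    unfolding t1_def t2_def using gen by (rule op_lR_inner_label_irrelevant)
  then have "op (bvec j) (vdiff t1 t2) w =
      vdiff (vdiff (op (bvec j) t1 w) (op (bvec (\<mu>', lR)) t1 w)) (vdiff (op (bvec j) t2 w) (op (bvec (\<mu>', lR)) t2 w))"
    using t gen by (simp add: op_vdiff_left vdiff_vdiff_same)
  also have "\<dots> \<in> label_ideal"
    using label_diff_in_ideal[OF t(1) \<open>w \<in> C\<close>] label_diff_in_ideal[OF t(2) \<open>w \<in> C\<close>]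
    unfolding j by (rule label_ideal_vdiff)
  finally show ?case unfolding t1_def t2_def .
next
  case zero
  then show ?case by (simp add: label_ideal.zero)
next
  case (add i i')
  then show ?case by (simp add: label_ideal_in op_vadd_left label_ideal.add)
next
  case (scale i c)
  then show ?case by (simp add: label_ideal_in op_vscale_left label_ideal.scale)
qed

lemma label_ideal_op_left: "i \<in> label_ideal \<Longrightarrow> w \<in> C \<Longrightarrow> op v i w \<in> label_ideal"
  using op_basis_expand[of i w v]
  by (simp add: label_ideal_in label_ideal_asum label_ideal.scale label_ideal_op_basis_left)

lemma label_ideal_op_right: "i \<in> label_ideal \<Longrightarrow> w \<in> C \<Longrightarrow> op v w i \<in> label_ideal"
  using label_ideal_op_left[of i w "tauV tau v"] op_tau[of i w v] label_ideal_in by simp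

lemma label_emb_diff_in_ideal: "x \<in> C \<Longrightarrow> y \<in> C \<Longrightarrow>
  vdiff (op (label_emb p v) x y) (op (label_emb p' v) x y) \<in> label_ideal"
proof -
  assume xy: "x \<in> C" "y \<in> C"
  have "vdiff (op (label_emb p v) x y) (op (label_emb p' v) x y) =
      asum A (\<lambda>\<mu>. vscale (v \<mu>) (vdiff (op (bvec (\<mu>, p)) x y) (op (bvec (\<mu>, p')) x y))) UNIV"
    using xy by (simp add: op_label_emb vscale_vdiff asum_vdiff[symmetric])
  also have "\<dots> \<in> label_ideal"
    using xy by (intro label_ideal_asum ballI label_ideal.scale label_diff_in_ideal) auto
  finally show ?thesis .
qed

definition eqv :: "'a \<Rightarrow> 'a \<Rightarrow> bool" where
  "eqv x y \<longleftrightarrow> x \<in> C \<and> y \<in> C \<and> vdiff x y \<in> label_ideal"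

lemma eqv_refl: "x \<in> C \<Longrightarrow> eqv x x"
  by (simp add: eqv_def label_ideal.zero)

lemma eqv_sym: "eqv x y \<Longrightarrow> eqv y x"
  unfolding eqv_def using vdiff_commute[of x y] label_ideal.scale[of "vdiff x y" "-1"] by simp

lemma eqv_trans: "eqv x y \<Longrightarrow> eqv y w \<Longrightarrow> eqv x w"
  unfolding eqv_def using vdiff_trans[of x y w] label_ideal.add[of "vdiff x y" "vdiff y w"] by simp

lemma eqv_vadd: "eqv x x' \<Longrightarrow> eqv y y' \<Longrightarrow> eqv (vadd x y) (vadd x' y')"
  unfolding eqv_def by (simp add: vdiff_vadd label_ideal.add)

lemma eqv_vscale: "eqv x x' \<Longrightarrow> eqv (vscale c x) (vscale c x')"
  unfolding eqv_def by (simp add: vscale_vdiff[symmetric] label_ideal.scale)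

lemma eqv_op: "eqv x x' \<Longrightarrow> eqv y y' \<Longrightarrow> eqv (op v x y) (op v x' y')"
proof -
  assume e: "eqv x x'" "eqv y y'"
  then have xy: "x \<in> C" "x' \<in> C" "y \<in> C" "y' \<in> C" by (auto simp: eqv_def)
  have "vdiff (op v x y) (op v x' y') = vadd (vdiff (op v x y) (op v x' y)) (vdiff (op v x' y) (op v x' y'))"
    using xy by (simp add: vdiff_trans)
  also have "\<dots> = vadd (op v (vdiff x x') y) (op v x' (vdiff y y'))"
    using xy by (simp add: op_vdiff_left op_vdiff_right)
  finally show ?thesis
    using e xy unfolding eqv_def by (simp add: label_ideal.add label_ideal_op_left label_ideal_op_right)
qed

lemma eqv_op_lR_left: "eqv x x' \<Longrightarrow> y \<in> C \<Longrightarrow> op (label_emb lR v) x y = op (label_emb lR v) x' y"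
  unfolding eqv_def using op_label_emb_lR_ideal_left[of "vdiff x x'" y v]
  by (simp add: op_vdiff_left vdiff_eq_zero_iff)

lemma eqv_op_lL_right: "eqv x x' \<Longrightarrow> y \<in> C \<Longrightarrow> op (label_emb lL v) y x = op (label_emb lL v) y x'"
  unfolding eqv_def using op_label_emb_lL_ideal_right[of "vdiff x x'" y v]
  by (simp add: op_vdiff_right vdiff_eq_zero_iff)

lemma eqv_op_label_emb: "x \<in> C \<Longrightarrow> y \<in> C \<Longrightarrow> eqv (op (label_emb p v) x y) (op (label_emb p' v) x y)"
  unfolding eqv_def using label_emb_diff_in_ideal by simp

lemma eqv_op_op_labels: "x \<in> C \<Longrightarrow> y \<in> C \<Longrightarrow> w \<in> C \<Longrightarrow>
  eqv (op (bvec (\<mu>, p)) (op (bvec (\<nu>, q)) x y) w) (op (bvec (\<mu>, p')) (op (bvec (\<nu>, q')) x y) w)"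
  by (rule eqv_trans[of _ "op (bvec (\<mu>, p')) (op (bvec (\<nu>, q)) x y) w", OF _ eqv_op])
    (auto simp: eqv_def label_diff_in_ideal label_ideal.zero)

lemma eqv_asum: "finite I \<Longrightarrow> \<forall>i\<in>I. eqv (f i) (g i) \<Longrightarrow> eqv (asum A f I) (asum A g I)"
proof (induction I rule: finite_induct)
  case (insert i I)
  then have "\<forall>j\<in>insert i I. f j \<in> C \<and> g j \<in> C" by (auto simp: eqv_def)
  then show ?case using insert by (simp add: asum_insert eqv_vadd)
qed (simp add: eqv_refl)

definition cls :: "'a \<Rightarrow> 'a set" where
  "cls x = {y. eqv y x}"

definition classes :: "'a set set" where
  "classes = cls ` C"

definition rep :: "'a set \<Rightarrow> 'a" where
  "rep X = (SOME x. x \<in> C \<and> X = cls x)"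

lemma cls_eq_iff: "x \<in> C \<Longrightarrow> y \<in> C \<Longrightarrow> cls x = cls y \<longleftrightarrow> eqv x y"
proof
  assume "x \<in> C" "cls x = cls y"
  then show "eqv x y" using eqv_refl by (auto simp: cls_def)
next
  assume "eqv x y"
  then show "cls x = cls y" unfolding cls_def using eqv_sym eqv_trans by blast
qed

lemma cls_eqI: "eqv x y \<Longrightarrow> cls x = cls y"
  using cls_eq_iff eqv_def by blast

lemma rep_cls: "x \<in> C \<Longrightarrow> rep (cls x) \<in> C \<and> eqv (rep (cls x)) x"
proof -
  assume x: "x \<in> C"
  then have "\<exists>y. y \<in> C \<and> cls x = cls y" by blast
  then have "rep (cls x) \<in> C \<and> cls x = cls (rep (cls x))" unfolding rep_def by (rule someI_ex)
  then show ?thesis using x cls_eq_iff eqv_sym by blast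
qed

lemma cls_rep: "X \<in> classes \<Longrightarrow> rep X \<in> C \<and> cls (rep X) = X"
  using rep_cls cls_eqI classes_def by auto

definition op_both :: "('o \<Rightarrow> 'k) \<Rightarrow> 'a \<Rightarrow> 'a \<Rightarrow> 'a" where
  "op_both v x y = (case lB of None \<Rightarrow> vzero | Some l \<Rightarrow> op (label_emb l v) x y)"

lemma op_both_in [simp]: "x \<in> C \<Longrightarrow> y \<in> C \<Longrightarrow> op_both v x y \<in> C"
  by (simp add: op_both_def split: option.split)

lemma op_both_vadd_left: "x \<in> C \<Longrightarrow> x' \<in> C \<Longrightarrow> y \<in> C \<Longrightarrow>
    op_both v (vadd x x') y = vadd (op_both v x y) (op_both v x' y)"
  and op_both_vadd_right: "x \<in> C \<Longrightarrow> x' \<in> C \<Longrightarrow> y \<in> C \<Longrightarrow>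
    op_both v y (vadd x x') = vadd (op_both v y x) (op_both v y x')"
  and op_both_vscale_left: "x \<in> C \<Longrightarrow> y \<in> C \<Longrightarrow> op_both v (vscale c x) y = vscale c (op_both v x y)"
  and op_both_vscale_right: "x \<in> C \<Longrightarrow> y \<in> C \<Longrightarrow> op_both v x (vscale c y) = vscale c (op_both v x y)"
  and op_both_label_add: "x \<in> C \<Longrightarrow> y \<in> C \<Longrightarrow>
    op_both (\<lambda>i. v i + w i) x y = vadd (op_both v x y) (op_both w x y)"
  and op_both_label_scale: "x \<in> C \<Longrightarrow> y \<in> C \<Longrightarrow> op_both (\<lambda>i. c * v i) x y = vscale c (op_both v x y)"
  by (simp_all add: op_both_def op_vadd_left op_vadd_right op_vscale_left op_vscale_right
      op_label_add op_label_scale label_emb_add label_emb_scale split: option.split)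

lemma op_both_tau: "x \<in> C \<Longrightarrow> y \<in> C \<Longrightarrow> op_both (tauV (fst P) v) x y = op_both v y x"
proof (cases lB)
  case (Some l)
  assume "x \<in> C" "y \<in> C"
  then show ?thesis unfolding op_both_def using Some op_tau[of x y "label_emb l v"] swp_lB[OF Some]
    by (simp add: tauV_had_tau_label_emb)
qed (unfold op_both_def, simp)

definition hat :: "('a set \<times> 'a, 'k, 'o) alg" where
  "hat = \<lparr>carr = classes \<times> C,
     addA = (\<lambda>h1 h2. (cls (vadd (rep (fst h1)) (rep (fst h2))), vadd (snd h1) (snd h2))),
     zeroA = (cls vzero, vzero),
     scaleA = (\<lambda>c h. (cls (vscale c (rep (fst h))), vscale c (snd h))),
     opA = (\<lambda>v h1 h2. (cls (op (label_emb lL v) (rep (fst h1)) (rep (fst h2))),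
        vadd (vadd (op (label_emb lL v) (snd h1) (rep (fst h2))) (op (label_emb lR v) (rep (fst h1)) (snd h2)))
          (op_both v (snd h1) (snd h2))))\<rparr>"

lemma hat_carr: "carr hat = classes \<times> C"
  and hat_zero: "zeroA hat = (cls vzero, vzero)"
  by (simp_all add: hat_def)

lemma hat_ball: "(\<forall>h\<in>carr hat. Q h) \<longleftrightarrow> (\<forall>u\<in>C. \<forall>x\<in>C. Q (cls u, x))"
  by (auto simp: hat_carr classes_def)

lemma hat_add: "u \<in> C \<Longrightarrow> u' \<in> C \<Longrightarrow> addA hat (cls u, x) (cls u', x') = (cls (vadd u u'), vadd x x')"
  using rep_cls by (simp add: hat_def cls_eqI eqv_vadd)

lemma hat_scale: "u \<in> C \<Longrightarrow> scaleA hat c (cls u, x) = (cls (vscale c u), vscale c x)"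
  using rep_cls by (simp add: hat_def cls_eqI eqv_vscale)

lemma hat_op:
  assumes "u \<in> C" "u' \<in> C" "x \<in> C" "x' \<in> C"
  shows "opA hat v (cls u, x) (cls u', x') =
    (cls (op (label_emb lL v) u u'),
     vadd (vadd (op (label_emb lL v) x u') (op (label_emb lR v) u x')) (op_both v x x'))"
proof -
  have r: "eqv (rep (cls u)) u" "eqv (rep (cls u')) u'"
    using rep_cls assms by auto
  have "cls (op (label_emb lL v) (rep (cls u)) (rep (cls u'))) = cls (op (label_emb lL v) u u')"
    using r by (intro cls_eqI eqv_op)
  moreover have "op (label_emb lL v) x (rep (cls u')) = op (label_emb lL v) x u'"
    using r assms by (intro eqv_op_lL_right)
  moreover have "op (label_emb lR v) (rep (cls u)) x' = op (label_emb lR v) u x'"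
    using r assms by (intro eqv_op_lR_left)
  ultimately show ?thesis by (simp add: hat_def)
qed

lemma kvs_hat: "kvs hat"
  unfolding kvs_def hat_ball
proof (intro conjI ballI allI)
  fix u x u' x' u'' x'' assume a: "u \<in> C" "x \<in> C" "u' \<in> C" "x' \<in> C" "u'' \<in> C" "x'' \<in> C"
  show "addA hat (addA hat (cls u, x) (cls u', x')) (cls u'', x'') =
      addA hat (cls u, x) (addA hat (cls u', x') (cls u'', x''))"
    using a by (simp add: hat_add vadd_assoc)
  show "addA hat (cls u, x) (cls u', x') = addA hat (cls u', x') (cls u, x)"
    using a by (simp add: hat_add vadd_commute)
  show "addA hat (cls u, x) (cls u', x') \<in> carr hat"
    using a by (simp add: hat_add hat_carr classes_def)
next
  fix c d u x u' x' assume a: "u \<in> C" "x \<in> C" "u' \<in> C" "x' \<in> C"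
  show "scaleA hat c (cls u, x) \<in> carr hat"
    using a by (simp add: hat_scale hat_carr classes_def)
  show "addA hat (zeroA hat) (cls u, x) = (cls u, x)"
    using a by (simp add: hat_add hat_zero)
  show "addA hat (cls u, x) (scaleA hat (- 1) (cls u, x)) = zeroA hat"
    using a by (simp add: hat_add hat_scale hat_zero vadd_neg)
  show "scaleA hat 1 (cls u, x) = (cls u, x)"
    using a by (simp add: hat_scale)
  show "scaleA hat (c * d) (cls u, x) = scaleA hat c (scaleA hat d (cls u, x))"
    using a by (simp add: hat_scale vscale_mult)
  show "scaleA hat (c + d) (cls u, x) = addA hat (scaleA hat c (cls u, x)) (scaleA hat d (cls u, x))"
    using a by (simp add: hat_scale hat_add vscale_add_left)
  show "scaleA hat c (addA hat (cls u, x) (cls u', x')) =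
      addA hat (scaleA hat c (cls u, x)) (scaleA hat c (cls u', x'))"
    using a by (simp add: hat_scale hat_add vscale_add_right)
qed (simp add: hat_zero hat_carr classes_def)

sublocale hat: kvec hat
  by unfold_locales (rule kvs_hat)

lemma asum_hat: "finite I \<Longrightarrow> \<forall>i\<in>I. f i \<in> C \<and> g i \<in> C \<Longrightarrow>
  asum hat (\<lambda>i. (cls (f i), g i)) I = (cls (asum A f I), asum A g I)"
proof (induction I rule: finite_induct)
  case (insert i I)
  then have "asum hat (\<lambda>i. (cls (f i), g i)) (insert i I) = addA hat (cls (f i), g i) (asum hat (\<lambda>i. (cls (f i), g i)) I)"
    by (intro hat.asum_insert) (auto simp: hat_carr classes_def)
  then show ?case using insert by (simp add: hat_add asum_insert)
qed (simp add: hat_zero)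

lemma rel_vanishes_nondist: "r \<in> snd P \<Longrightarrow> \<not> dist3 a b c \<Longrightarrow> r (\<mu>, \<nu>, a, b, c) = 0"
  using bq unfolding bq_operad_def by blast

definition marked_rel :: "v3 set \<Rightarrow> ('o \<times> 'o \<times> v3 \<times> v3 \<times> v3 \<Rightarrow> 'k) \<Rightarrow>
    ('o \<times> 'l) \<times> ('o \<times> 'l) \<times> v3 \<times> v3 \<times> v3 \<Rightarrow> 'k" where
  "marked_rel S r = (\<lambda>((\<mu>, p), (\<nu>, q), a, b, c).
      if (p, q) = tree_labels lL lR lB S a b c then r (\<mu>, \<nu>, a, b, c) else 0)"

lemma marked_rel_in_had_rel:
  assumes r: "r \<in> snd P" and S: "S \<in> markings lB"
  shows "marked_rel S r \<in> had_rel P sel"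
  unfolding had_rel_def
proof (intro CollectI conjI allI impI)
  fix \<mu> \<nu> a b c assume "\<not> dist3 a b c"
  then show "marked_rel S r (\<mu>, \<nu>, a, b, c) = 0"
    using rel_vanishes_nondist[OF r] by (cases \<mu>; cases \<nu>) (auto simp: marked_rel_def)
next
  fix s
  have "(\<Sum>pq\<in>{pq. sel (fst pq) (snd pq) a b c = s}. marked_rel S r ((\<mu>, fst pq), (\<nu>, snd pq), a, b, c)) =
      (if sig S = s then r else (\<lambda>m. 0)) (\<mu>, \<nu>, a, b, c)" for \<mu> \<nu> a b c
  proof -
    have "(\<Sum>pq\<in>{pq. sel (fst pq) (snd pq) a b c = s}. marked_rel S r ((\<mu>, fst pq), (\<nu>, snd pq), a, b, c)) =
        (\<Sum>pq\<in>{pq. sel (fst pq) (snd pq) a b c = s}.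
          if pq = tree_labels lL lR lB S a b c then r (\<mu>, \<nu>, a, b, c) else 0)"
      by (intro sum.cong refl) (auto simp: marked_rel_def)
    also have "\<dots> = (if sig S = s then r else (\<lambda>m. 0)) (\<mu>, \<nu>, a, b, c)"
      using sel_tree_labels[OF S, of a b c] rel_vanishes_nondist[OF r, of a b c]
      by (cases "dist3 a b c") (auto simp: sum.delta')
    finally show ?thesis .
  qed
  then have "(\<lambda>(\<mu>, \<nu>, a, b, c). \<Sum>pq\<in>{pq. sel (fst pq) (snd pq) a b c = s}.
      marked_rel S r ((\<mu>, fst pq), (\<nu>, snd pq), a, b, c)) = (if sig S = s then r else (\<lambda>m. 0))"
    by auto
  then show "(\<lambda>(\<mu>, \<nu>, a, b, c). \<Sum>pq\<in>{pq. sel (fst pq) (snd pq) a b c = s}.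
      marked_rel S r ((\<mu>, fst pq), (\<nu>, snd pq), a, b, c)) \<in> ideal3 P"
    using zero_in_ideal3[of P] rel_in_ideal3[OF r] by simp
qed

definition marked_mon :: "v3 set \<Rightarrow> (v3 \<Rightarrow> 'a) \<Rightarrow> 'o \<times> 'o \<times> v3 \<times> v3 \<times> v3 \<Rightarrow> 'a" where
  "marked_mon S z = (\<lambda>(\<mu>, \<nu>, a, b, c). op (bvec (\<mu>, fst (tree_labels lL lR lB S a b c)))
      (op (bvec (\<nu>, snd (tree_labels lL lR lB S a b c))) (z a) (z b)) (z c))"

lemma marked_mon_in: "\<forall>i. z i \<in> C \<Longrightarrow> marked_mon S z m \<in> C"
  by (simp add: marked_mon_def split: prod.split)

lemma marked_rel_eval:
  assumes r: "r \<in> snd P" and S: "S \<in> markings lB" and z: "\<forall>i. z i \<in> C"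
  shows "asum A (\<lambda>m. vscale (r m) (marked_mon S z m)) UNIV = vzero"
proof -
  define label :: "'o \<times> 'o \<times> v3 \<times> v3 \<times> v3 \<Rightarrow> ('o \<times> 'l) \<times> ('o \<times> 'l) \<times> v3 \<times> v3 \<times> v3"
    where "label = (\<lambda>(\<mu>, \<nu>, a, b, c).
      ((\<mu>, fst (tree_labels lL lR lB S a b c)), (\<nu>, snd (tree_labels lL lR lB S a b c)), a, b, c))"
  let ?t = "\<lambda>(\<mu>, \<nu>, a, b, c). vscale (marked_rel S r (\<mu>, \<nu>, a, b, c)) (op (bvec \<mu>) (op (bvec \<nu>) (z a) (z b)) (z c))"
  have "vzero = eval3 A (marked_rel S r) z"
    using eval3_had_rel[OF marked_rel_in_had_rel[OF r S] z] by simp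
  also have "\<dots> = asum A ?t (range label)"
    unfolding eval3_def using z
  proof (intro asum_mono_neutral_right)
    fix m assume "m \<in> UNIV - range label"
    then show "?t m = vzero" using z
      by (cases m) (auto simp: marked_rel_def label_def image_iff split: if_splits prod.splits; metis fst_conv snd_conv)
  qed (auto split: prod.split)
  also have "\<dots> = asum A (\<lambda>m. ?t (label m)) UNIV"
    using z by (intro asum_reindex) (auto simp: inj_on_def label_def split: prod.split)
  also have "\<dots> = asum A (\<lambda>m. vscale (r m) (marked_mon S z m)) UNIV"
    by (intro asum_cong) (auto simp: label_def marked_rel_def marked_mon_def split: prod.split)
  finally show ?thesis by simp
qed

definition hat_snd :: "'o \<Rightarrow> 'a \<Rightarrow> 'a \<Rightarrow> 'a \<Rightarrow> 'a \<Rightarrow> 'a" where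
  "hat_snd \<nu> y1 u1 y2 u2 =
    vadd (vadd (op (bvec (\<nu>, lL)) y1 u2) (op (bvec (\<nu>, lR)) u1 y2)) (op_both (bvec \<nu>) y1 y2)"

lemma hat_snd_in [simp]: "y1 \<in> C \<Longrightarrow> u1 \<in> C \<Longrightarrow> y2 \<in> C \<Longrightarrow> u2 \<in> C \<Longrightarrow> hat_snd \<nu> y1 u1 y2 u2 \<in> C"
  by (simp add: hat_snd_def)

lemma hat_op_bvec: "u1 \<in> C \<Longrightarrow> u2 \<in> C \<Longrightarrow> y1 \<in> C \<Longrightarrow> y2 \<in> C \<Longrightarrow>
  opA hat (bvec \<nu>) (cls u1, y1) (cls u2, y2) = (cls (op (bvec (\<nu>, lL)) u1 u2), hat_snd \<nu> y1 u1 y2 u2)"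
  by (simp add: hat_op hat_snd_def label_emb_bvec)

definition mixed :: "v3 set \<Rightarrow> (v3 \<Rightarrow> 'a) \<Rightarrow> (v3 \<Rightarrow> 'a) \<Rightarrow> v3 \<Rightarrow> 'a" where
  "mixed S y u i = (if i \<in> S then y i else u i)"

lemma hat_snd_hat_snd_eq_sum_markings:
  assumes d: "dist3 a b c" and y: "\<forall>i. y i \<in> C" and u: "\<forall>i. u i \<in> C"
  shows "hat_snd \<mu> (hat_snd \<nu> (y a) (u a) (y b) (u b)) (op (bvec (\<nu>, lL)) (u a) (u b)) (y c) (u c) =
    asum A (\<lambda>S. marked_mon S (mixed S y u) (\<mu>, \<nu>, a, b, c)) (markings lB)"
proof -
  have ne: "a \<noteq> b" "b \<noteq> c" "a \<noteq> c" "b \<noteq> a" "c \<noteq> b" "c \<noteq> a" using d by (auto simp: dist3_def)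
  have "\<forall>S. marked_mon S (mixed S y u) (\<mu>, \<nu>, a, b, c) \<in> C"
    using y u by (simp add: marked_mon_in mixed_def)
  then have "asum A (\<lambda>S. marked_mon S (mixed S y u) (\<mu>, \<nu>, a, b, c)) (markings lB) =
      asum A (\<lambda>M. marked_mon (marking a b c M) (mixed (marking a b c M) y u) (\<mu>, \<nu>, a, b, c)) (marking_codes lB)"
    unfolding markings_eq_image[OF d] using inj_on_marking[OF d]
    by (subst asum_reindex) (auto simp: marking_codes_def split: option.split)
  also have "\<dots> = hat_snd \<mu> (hat_snd \<nu> (y a) (u a) (y b) (u b)) (op (bvec (\<nu>, lL)) (u a) (u b)) (y c) (u c)"
  proof (cases lB)
    case None
    show ?thesis unfolding marked_mon_def hat_snd_def op_both_def marking_codes_def using None y u ne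
      by (simp add: asum_insert mixed_def marking_def tree_labels_def inner_label_def op_vadd_left vadd_assoc)
  next
    case (Some l)
    show ?thesis unfolding marked_mon_def hat_snd_def op_both_def marking_codes_def using Some y u ne
      by (simp add: asum_insert mixed_def marking_def tree_labels_def inner_label_def op_vadd_left vadd_assoc
          label_emb_bvec)
  qed
  finally show ?thesis by simp
qed

definition bar_mon :: "(v3 \<Rightarrow> 'a) \<Rightarrow> 'o \<times> 'o \<times> v3 \<times> v3 \<times> v3 \<Rightarrow> 'a" where
  "bar_mon u = (\<lambda>(\<mu>, \<nu>, a, b, c). op (bvec (\<mu>, lL)) (op (bvec (\<nu>, lL)) (u a) (u b)) (u c))"

definition hat_snd_mon :: "(v3 \<Rightarrow> 'a) \<Rightarrow> (v3 \<Rightarrow> 'a) \<Rightarrow> 'o \<times> 'o \<times> v3 \<times> v3 \<times> v3 \<Rightarrow> 'a" where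
  "hat_snd_mon y u = (\<lambda>(\<mu>, \<nu>, a, b, c).
      hat_snd \<mu> (hat_snd \<nu> (y a) (u a) (y b) (u b)) (op (bvec (\<nu>, lL)) (u a) (u b)) (y c) (u c))"

lemma eval3_hat:
  assumes u: "\<forall>i. u i \<in> C" and y: "\<forall>i. y i \<in> C"
  shows "eval3 hat r (\<lambda>i. (cls (u i), y i)) =
    (cls (asum A (\<lambda>m. vscale (r m) (bar_mon u m)) UNIV), asum A (\<lambda>m. vscale (r m) (hat_snd_mon y u m)) UNIV)"
proof -
  have "(\<lambda>(\<mu>, \<nu>, a, b, c). scaleA hat (r (\<mu>, \<nu>, a, b, c)) (opA hat (bvec \<mu>)
        (opA hat (bvec \<nu>) (cls (u a), y a) (cls (u b), y b)) (cls (u c), y c))) =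
      (\<lambda>m. (cls (vscale (r m) (bar_mon u m)), vscale (r m) (hat_snd_mon y u m)))"
    using u y by (auto simp: hat_op_bvec hat_scale bar_mon_def hat_snd_mon_def)
  then show ?thesis
    unfolding eval3_def using u y
    by (simp add: asum_hat bar_mon_def hat_snd_mon_def split: prod.split)
qed

lemma rel_eval_bar_mon_eqv_zero:
  assumes r: "r \<in> snd P" and u: "\<forall>i. u i \<in> C"
  shows "eqv (asum A (\<lambda>m. vscale (r m) (bar_mon u m)) UNIV) vzero"
proof -
  have "{X1} \<in> markings lB" by (simp add: markings_def)
  then have "asum A (\<lambda>m. vscale (r m) (marked_mon {X1} u m)) UNIV = vzero"
    using marked_rel_eval[OF r _ u] by blast
  moreover have "eqv (bar_mon u m) (marked_mon {X1} u m)" for m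
    using u by (cases m) (simp add: bar_mon_def marked_mon_def eqv_op_op_labels)
  ultimately show ?thesis
    by (metis (no_types, lifting) eqv_asum eqv_vscale finite_UNIV)
qed

lemma rel_eval_hat_snd_mon_zero:
  assumes r: "r \<in> snd P" and y: "\<forall>i. y i \<in> C" and u: "\<forall>i. u i \<in> C"
  shows "asum A (\<lambda>m. vscale (r m) (hat_snd_mon y u m)) UNIV = vzero"
proof -
  have mC: "marked_mon S (mixed S y u) m \<in> C" for S m
    using y u by (simp add: marked_mon_in mixed_def)
  have "vscale (r m) (hat_snd_mon y u m) = asum A (\<lambda>S. vscale (r m) (marked_mon S (mixed S y u) m)) (markings lB)"
    for m
  proof -
    obtain \<mu> \<nu> a b c where m: "m = (\<mu>, \<nu>, a, b, c)" by (cases m) auto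
    show ?thesis
    proof (cases "dist3 a b c")
      case True
      then show ?thesis
        unfolding m hat_snd_mon_def using hat_snd_hat_snd_eq_sum_markings[OF True y u] mC
        by (simp add: asum_vscale)
    next
      case False
      then show ?thesis using rel_vanishes_nondist[OF r False] mC y u
        by (simp add: m asum_neutral hat_snd_mon_def)
    qed
  qed
  then have "asum A (\<lambda>m. vscale (r m) (hat_snd_mon y u m)) UNIV =
      asum A (\<lambda>m. asum A (\<lambda>S. vscale (r m) (marked_mon S (mixed S y u) m)) (markings lB)) UNIV"
    by simp
  also have "\<dots> = asum A (\<lambda>S. asum A (\<lambda>m. vscale (r m) (marked_mon S (mixed S y u) m)) UNIV) (markings lB)"
    using mC by (intro asum_swap) auto
  also have "\<dots> = vzero"
  proof (rule asum_neutral)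
    fix S assume "S \<in> markings lB"
    moreover have "\<forall>i. mixed S y u i \<in> C" using y u by (simp add: mixed_def)
    ultimately show "asum A (\<lambda>m. vscale (r m) (marked_mon S (mixed S y u) m)) UNIV = vzero"
      by (rule marked_rel_eval[OF r])
  qed simp
  finally show ?thesis .
qed

lemma eval3_hat_rel:
  assumes r: "r \<in> snd P" and x: "\<forall>i. x i \<in> carr hat"
  shows "eval3 hat r x = zeroA hat"
proof -
  define u where "u i = rep (fst (x i))" for i
  define y where "y i = snd (x i)" for i
  have u: "\<forall>i. u i \<in> C" and y: "\<forall>i. y i \<in> C" and xi: "x = (\<lambda>i. (cls (u i), y i))"
    using x cls_rep by (auto simp: u_def y_def hat_carr mem_Times_iff prod_eq_iff)
  have "cls (asum A (\<lambda>m. vscale (r m) (bar_mon u m)) UNIV) = cls vzero"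
    using rel_eval_bar_mon_eqv_zero[OF r u] by (rule cls_eqI)
  then show ?thesis
    unfolding xi using eval3_hat[OF u y] rel_eval_hat_snd_mon_zero[OF r y u] by (simp add: hat_zero)
qed

lemma hat_op_tau:
  assumes "u \<in> C" "x \<in> C" "u' \<in> C" "x' \<in> C"
  shows "opA hat (tauV (fst P) v) (cls u, x) (cls u', x') = opA hat v (cls u', x') (cls u, x)"
proof -
  have "op (label_emb lL v) u' u = op (label_emb lR (tauV (fst P) v)) u u'"
    and "op (label_emb lL v) x' u = op (label_emb lR (tauV (fst P) v)) u x'"
    and "op (label_emb lR v) u' x = op (label_emb lL (tauV (fst P) v)) x u'"
    using assms op_tau[of u u' "label_emb lL v"] op_tau[of u x' "label_emb lL v"]
      op_tau[of x u' "label_emb lR v"]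
    by (simp_all add: tauV_had_tau_label_emb swp_lL swp_lR)
  moreover have "cls (op (label_emb lL (tauV (fst P) v)) u u') = cls (op (label_emb lR (tauV (fst P) v)) u u')"
    using assms by (intro cls_eqI eqv_op_label_emb)
  ultimately show ?thesis
    using assms by (simp add: hat_op op_both_tau vadd_commute)
qed

lemma is_alg_hat: "is_alg P hat"
  unfolding is_alg_def hat_ball
proof (intro conjI ballI allI impI)
  show "kvs hat" by (rule kvs_hat)
next
  fix v u x u' x' assume a: "u \<in> C" "x \<in> C" "u' \<in> C" "x' \<in> C"
  show "opA hat v (cls u, x) (cls u', x') \<in> carr hat"
    using a by (simp add: hat_op hat_carr classes_def)
next
  fix v u x u' x' u'' x'' assume a: "u \<in> C" "x \<in> C" "u' \<in> C" "x' \<in> C" "u'' \<in> C" "x'' \<in> C"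
  show "opA hat v (addA hat (cls u, x) (cls u', x')) (cls u'', x'') =
      addA hat (opA hat v (cls u, x) (cls u'', x'')) (opA hat v (cls u', x') (cls u'', x''))"
    using a by (simp add: hat_op hat_add op_vadd_left op_both_vadd_left vadd_swap_middle3)
  show "opA hat v (cls u'', x'') (addA hat (cls u, x) (cls u', x')) =
      addA hat (opA hat v (cls u'', x'') (cls u, x)) (opA hat v (cls u'', x'') (cls u', x'))"
    using a by (simp add: hat_op hat_add op_vadd_right op_both_vadd_right vadd_swap_middle3)
next
  fix v c u x u' x' assume a: "u \<in> C" "x \<in> C" "u' \<in> C" "x' \<in> C"
  show "opA hat v (scaleA hat c (cls u, x)) (cls u', x') = scaleA hat c (opA hat v (cls u, x) (cls u', x'))"
    using a by (simp add: hat_op hat_scale op_vscale_left op_both_vscale_left vscale_add_right)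
  show "opA hat v (cls u, x) (scaleA hat c (cls u', x')) = scaleA hat c (opA hat v (cls u, x) (cls u', x'))"
    using a by (simp add: hat_op hat_scale op_vscale_right op_both_vscale_right vscale_add_right)
  show "opA hat (\<lambda>i. c * v i) (cls u, x) (cls u', x') = scaleA hat c (opA hat v (cls u, x) (cls u', x'))"
    using a by (simp add: hat_op hat_scale label_emb_scale op_label_scale op_both_label_scale vscale_add_right)
next
  fix v w u x u' x' assume a: "u \<in> C" "x \<in> C" "u' \<in> C" "x' \<in> C"
  show "opA hat (\<lambda>i. v i + w i) (cls u, x) (cls u', x') =
      addA hat (opA hat v (cls u, x) (cls u', x')) (opA hat w (cls u, x) (cls u', x'))"
    using a by (simp add: hat_op hat_add label_emb_add op_label_add op_both_label_add vadd_swap_middle3)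
next
  fix v u x u' x' assume "u \<in> C" "x \<in> C" "u' \<in> C" "x' \<in> C"
  then show "opA hat (tauV (fst P) v) (cls u, x) (cls u', x') = opA hat v (cls u', x') (cls u, x)"
    by (rule hat_op_tau)
qed (rule eval3_hat_rel)

definition hat_emb :: "bool \<Rightarrow> 'a \<Rightarrow> 'a set \<times> 'a" where
  "hat_emb k x = (if k then (cls vzero, x) else (cls x, vzero))"

definition hat_label :: "bool \<Rightarrow> bool \<Rightarrow> ('o \<Rightarrow> 'k) \<Rightarrow> ('o \<times> 'l \<Rightarrow> 'k)" where
  "hat_label k1 k2 v = (if k1 \<and> k2 then (case lB of None \<Rightarrow> (\<lambda>i. 0) | Some l \<Rightarrow> label_emb l v)
     else if k2 then label_emb lR v else label_emb lL v)"

lemma hat_emb_eq_zero_iff: "hat_emb True x = zeroA hat \<longleftrightarrow> x = vzero"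
  by (simp add: hat_emb_def hat_zero)

lemma op_hat_emb: "x \<in> C \<Longrightarrow> y \<in> C \<Longrightarrow>
  opA hat v (hat_emb k1 x) (hat_emb k2 y) = hat_emb (k1 \<or> k2) (op (hat_label k1 k2 v) x y)"
  by (cases k1; cases k2) (auto simp: hat_emb_def hat_label_def hat_op op_both_def split: option.split)

lemma vscale_hat_emb: "x \<in> C \<Longrightarrow> scaleA hat c (hat_emb k x) = hat_emb k (vscale c x)"
  by (cases k) (simp_all add: hat_emb_def hat_scale)

lemma asum_hat_emb: "finite I \<Longrightarrow> \<forall>i\<in>I. f i \<in> C \<Longrightarrow> asum hat (\<lambda>i. hat_emb k (f i)) I = hat_emb k (asum A f I)"
  by (cases k) (simp_all add: hat_emb_def asum_hat asum_neutral)

lemma distr_hat_emb: "distr A a \<Longrightarrow> distr hat (\<lambda>s. hat_emb k (a s))"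
  by (simp add: distr_def hat_emb_def hat_carr classes_def)

lemma loc_coef_hat_emb: "distr A a \<Longrightarrow> distr A b \<Longrightarrow>
  loc_coef hat v (\<lambda>s. hat_emb k1 (a s)) (\<lambda>s. hat_emb k2 (b s)) N m n =
    hat_emb (k1 \<or> k2) (loc_coef A (hat_label k1 k2 v) a b N m n)"
  unfolding loc_coef_def distr_def by (simp add: op_hat_emb vscale_hat_emb asum_hat_emb)

lemma nprod_hat_emb: "distr A a \<Longrightarrow> distr A b \<Longrightarrow>
  nprod hat v n (\<lambda>s. hat_emb k1 (a s)) (\<lambda>s. hat_emb k2 (b s)) =
    (\<lambda>s. hat_emb (k1 \<or> k2) (nprod A (hat_label k1 k2 v) n a b s))"
  unfolding nprod_def distr_def by (simp add: op_hat_emb vscale_hat_emb asum_hat_emb)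

lemma local_hat_emb:
  assumes "distr A a" "distr A b" "local A a b"
  shows "local hat (\<lambda>s. hat_emb k1 (a s)) (\<lambda>s. hat_emb k2 (b s))"
proof -
  have "hat_emb k vzero = zeroA hat" for k by (simp add: hat_emb_def hat_zero)
  then show ?thesis using assms unfolding local_def local_op_def by (metis loc_coef_hat_emb)
qed

lemma local_op_of_hat_emb: "distr A a \<Longrightarrow> distr A b \<Longrightarrow> k1 \<or> k2 \<Longrightarrow>
  local_op hat v (\<lambda>s. hat_emb k1 (a s)) (\<lambda>s. hat_emb k2 (b s)) \<Longrightarrow> local_op A (hat_label k1 k2 v) a b"
  unfolding local_op_def by (simp add: loc_coef_hat_emb hat_emb_eq_zero_iff)

lemma eqv_nprod_label_emb: "distr A a \<Longrightarrow> distr A b \<Longrightarrow>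
  eqv (nprod A (label_emb l w) n a b s) (nprod A (label_emb l' w) n a b s)"
  unfolding nprod_eq distr_def by (intro eqv_asum ballI eqv_vscale eqv_op_label_emb) auto

lemma loc_coef_eqv_left: "\<forall>s. eqv (d s) (d' s) \<Longrightarrow> distr A c \<Longrightarrow>
  loc_coef A (label_emb lR u) d c N m n = loc_coef A (label_emb lR u) d' c N m n"
  unfolding loc_coef_eq distr_def by (intro asum_cong) (simp_all, metis eqv_op_lR_left)

lemma loc_coef_eqv_right: "\<forall>s. eqv (d s) (d' s) \<Longrightarrow> distr A c \<Longrightarrow>
  loc_coef A (label_emb lL u) c d N m n = loc_coef A (label_emb lL u) c d' N m n"
  unfolding loc_coef_eq distr_def by (intro asum_cong) (simp_all, metis eqv_op_lL_right)

lemma label_emb_eq_hat_label: "\<exists>ka kb. (ka \<or> kb) \<and> hat_label ka kb w = label_emb l w"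
proof -
  have "l \<in> {lL, lR} \<union> set_option lB" using labels_UNIV by blast
  then consider "l = lL" | "l = lR" | "lB = Some l" by auto
  then show ?thesis
  proof cases
    case 1
    then show ?thesis by (intro exI[of _ True] exI[of _ False]) (simp add: hat_label_def)
  next
    case 2
    then show ?thesis by (intro exI[of _ False] exI[of _ True]) (simp add: hat_label_def)
  next
    case 3
    then show ?thesis unfolding hat_label_def by (intro exI[of _ True] exI[of _ True]) simp
  qed
qed

context
  fixes a b c
  assumes dong_hat: "dong_alg hat"
    and distr: "distr A a" "distr A b" "distr A c"
    and local: "local A a b" "local A b c" "local A a c"
begin

lemma local_op_hat_label_nprod:
  assumes "ka \<or> kb \<or> kc"
  shows "local_op A (hat_label (ka \<or> kb) kc u) (nprod A (hat_label ka kb w) n a b) c \<and>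
    local_op A (hat_label kc (ka \<or> kb) u) c (nprod A (hat_label ka kb w) n a b)"
proof -
  have "local hat (nprod hat w n (\<lambda>s. hat_emb ka (a s)) (\<lambda>s. hat_emb kb (b s))) (\<lambda>s. hat_emb kc (c s))"
    using dong_hat distr local unfolding dong_alg_def by (simp add: distr_hat_emb local_hat_emb)
  then have "local hat (\<lambda>s. hat_emb (ka \<or> kb) (nprod A (hat_label ka kb w) n a b s)) (\<lambda>s. hat_emb kc (c s))"
    using distr by (simp add: nprod_hat_emb)
  then have h1: "local_op hat u (\<lambda>s. hat_emb (ka \<or> kb) (nprod A (hat_label ka kb w) n a b s)) (\<lambda>s. hat_emb kc (c s))"
    and h2: "local_op hat u (\<lambda>s. hat_emb kc (c s)) (\<lambda>s. hat_emb (ka \<or> kb) (nprod A (hat_label ka kb w) n a b s))"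
    unfolding local_def by auto
  have "distr A (nprod A (hat_label ka kb w) n a b)"
    using distr by (intro distr_nprod)
  then show ?thesis
    using local_op_of_hat_emb[OF _ distr(3) _ h1] local_op_of_hat_emb[OF distr(3) _ _ h2] assms by auto
qed

text \<open>Through hat A, the operation lR only reaches n-products with label lL; the others are
  congruent to it modulo the ideal, which lR does not see in its left argument.\<close>

lemma local_op_label_emb_nprod_left: "local_op A (label_emb l' u) (nprod A (label_emb l w) n a b) c"
proof (cases "l' = lR")
  case True
  have "local_op A (label_emb lR u) (nprod A (label_emb lL w) n a b) c"
    using local_op_hat_label_nprod[of False False True u w n] by (simp add: hat_label_def)
  moreover have "\<forall>s. eqv (nprod A (label_emb l w) n a b s) (nprod A (label_emb lL w) n a b s)"
    using distr eqv_nprod_label_emb by blast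
  ultimately show ?thesis
    using True distr loc_coef_eqv_left unfolding local_op_def by metis
next
  case False
  obtain ka kb where k: "ka \<or> kb" "hat_label ka kb w = label_emb l w"
    using label_emb_eq_hat_label by blast
  have "l' \<in> {lL, lR} \<union> set_option lB" using labels_UNIV by blast
  then have "hat_label True (l' \<noteq> lL) u = label_emb l' u" using False lL_neq_lR by (auto simp: hat_label_def)
  then show ?thesis using local_op_hat_label_nprod[of ka kb "l' \<noteq> lL" u w n] k by auto
qed

lemma local_op_label_emb_nprod_right: "local_op A (label_emb l' u) c (nprod A (label_emb l w) n a b)"
proof (cases "l' = lL")
  case True
  have "local_op A (label_emb lL u) c (nprod A (label_emb lL w) n a b)"
    using local_op_hat_label_nprod[of False False True u w n] by (simp add: hat_label_def)
  moreover have "\<forall>s. eqv (nprod A (label_emb l w) n a b s) (nprod A (label_emb lL w) n a b s)"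
    using distr eqv_nprod_label_emb by blast
  ultimately show ?thesis
    using True distr loc_coef_eqv_right unfolding local_op_def by metis
next
  case False
  obtain ka kb where k: "ka \<or> kb" "hat_label ka kb w = label_emb l w"
    using label_emb_eq_hat_label by blast
  have "l' \<in> {lL, lR} \<union> set_option lB" using labels_UNIV by blast
  then have "hat_label (l' \<noteq> lR) True u = label_emb l' u" using False lL_neq_lR by (auto simp: hat_label_def)
  then show ?thesis using local_op_hat_label_nprod[of ka kb "l' \<noteq> lR" u w n] k by auto
qed

lemma local_nprod_of_dong_hat: "local A (nprod A w n a b) c"
proof -
  define d where "d l = nprod A (label_emb l (\<lambda>\<mu>. w (\<mu>, l))) n a b" for l
  have nprod_d: "nprod A w n a b = (\<lambda>s. asum A (\<lambda>l. d l s) UNIV)"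
    unfolding d_def by (subst label_decomp) (rule nprod_label_sum[OF finite_UNIV distr(1,2)])
  have dd: "distr A (d l)" for l unfolding d_def using distr by (intro distr_nprod)
  have "local_op A (label_emb l' u') (nprod A w n a b) c" for l' u'
    unfolding nprod_d using dd distr(3)
    by (intro local_op_sum_left) (auto simp: d_def local_op_label_emb_nprod_left)
  moreover have "local_op A (label_emb l' u') c (nprod A w n a b)" for l' u'
    unfolding nprod_d using dd distr(3)
    by (intro local_op_sum_right) (auto simp: d_def local_op_label_emb_nprod_right)
  moreover have "distr A (nprod A w n a b)" using distr by (intro distr_nprod)
  ultimately have "local_op A (\<lambda>i. \<Sum>l'\<in>UNIV. label_emb l' (\<lambda>\<mu>. u (\<mu>, l')) i) (nprod A w n a b) c"
    and "local_op A (\<lambda>i. \<Sum>l'\<in>UNIV. label_emb l' (\<lambda>\<mu>. u (\<mu>, l')) i) c (nprod A w n a b)" for u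
    using distr(3) by (simp_all add: local_op_label_sum)
  then show ?thesis unfolding local_def by (simp flip: label_decomp)
qed

end

lemma dong_alg_of_dong_hat: "dong_alg hat \<Longrightarrow> dong_alg A"
  unfolding dong_alg_def[of A] using local_nprod_of_dong_hat by blast

end

section \<open>Di- and tri-replications of a Dong operad\<close>

text \<open>hat A has carrier type \<open>'a set \<times> 'a\<close>; this code embeds it into \<open>('a \<times> 'k \<times> nat) set\<close>,
  which the hypothesis of the theorem embeds into the type where P is known to be Dong.\<close>

definition set_pair_code :: "'a set \<times> 'a \<Rightarrow> ('a \<times> 'k::zero \<times> nat) set" where
  "set_pair_code p = (\<lambda>y. (y, 0, 0)) ` fst p \<union> {(snd p, 0, 1)}"

lemma inj_set_pair_code: "inj (set_pair_code :: 'a set \<times> 'a \<Rightarrow> ('a \<times> 'k::zero \<times> nat) set)"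
proof (rule injI)
  fix p q :: "'a set \<times> 'a"
  assume eq: "(set_pair_code p :: ('a \<times> 'k \<times> nat) set) = set_pair_code q"
  have "z \<in> fst p \<longleftrightarrow> (z, 0::'k, 0::nat) \<in> set_pair_code p" "z \<in> fst q \<longleftrightarrow> (z, 0::'k, 0::nat) \<in> set_pair_code q"
    for z by (auto simp: set_pair_code_def)
  then have "fst p = fst q" using eq by blast
  moreover have "(snd p, 0::'k, 1::nat) \<in> set_pair_code q" using eq by (auto simp: set_pair_code_def)
  then have "snd p = snd q" by (auto simp: set_pair_code_def)
  ultimately show "p = q" by (simp add: prod_eq_iff)
qed

lemma (in replication) dong_alg_replication:
  assumes dong: "dong_in TYPE('b) P" and f: "inj (f :: ('a \<times> 'k \<times> nat) set \<Rightarrow> 'b)"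
  shows "dong_alg A"
proof -
  have g: "inj (f \<circ> set_pair_code)" using inj_compose[OF f inj_set_pair_code] .
  then have "is_alg P (map_alg (f \<circ> set_pair_code) hat)" by (rule is_alg_map_alg[OF _ is_alg_hat])
  then have "dong_alg (map_alg (f \<circ> set_pair_code) hat)" using dong unfolding dong_in_def by blast
  then show ?thesis using dong_alg_of_dong_map_alg[OF g] dong_alg_of_dong_hat by blast
qed

lemma replication_di:
  assumes "bq_operad P" "is_alg (di P) A"
  shows "replication P sel_perm swp_perm T1 T2 None (\<lambda>S. SOME k. k \<in> S) A"
proof
  show "is_alg (had_tau swp_perm (fst P), had_rel P sel_perm) A" using assms by (simp add: di_def)
  show "UNIV = {T1, T2} \<union> set_option None" using two.exhaust by auto
next
  fix S a b c assume "S \<in> markings None" and d: "dist3 a b c"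
  then obtain k where k: "S = {k}" by (auto simp: markings_def card_1_singleton_iff)
  have "k = a \<or> k = b \<or> k = c" using dist3_covers[OF d] by blast
  then show "sel_perm (fst (tree_labels T1 T2 None S a b c)) (snd (tree_labels T1 T2 None S a b c)) a b c =
      (SOME k. k \<in> S)"
    using d unfolding k by (auto simp: dist3_def tree_labels_def inner_label_def sel_perm_def)
qed (auto simp: assms sel_perm_def swp_perm_def)

lemma replication_tri:
  assumes "bq_operad P" "is_alg (tri P) A"
  shows "replication P sel_ct swp_ct C1 C2 (Some C12) id A"
proof
  show "is_alg (had_tau swp_ct (fst P), had_rel P sel_ct) A" using assms by (simp add: tri_def)
  show "UNIV = {C1, C2} \<union> set_option (Some C12)" using ct2.exhaust by auto
next
  fix S a b c assume S: "S \<in> markings (Some C12)" and d: "dist3 a b c"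
  have ne: "a \<noteq> b" "b \<noteq> c" "a \<noteq> c" "b \<noteq> a" "c \<noteq> b" "c \<noteq> a" using d by (auto simp: dist3_def)
  have "S \<noteq> {}" using S by (simp add: markings_def)
  moreover have S_eq: "S = marking a b c (a \<in> S, b \<in> S, c \<in> S)" using marking_members[OF d] .
  ultimately show "sel_ct (fst (tree_labels C1 C2 (Some C12) S a b c)) (snd (tree_labels C1 C2 (Some C12) S a b c))
      a b c = id S"
    using ne by (cases "a \<in> S"; cases "b \<in> S"; cases "c \<in> S"; subst (3) S_eq)
      (auto simp: tree_labels_def inner_label_def sel_ct_def ct_has1_def ct_has2_def marking_def)
qed (auto simp: assms sel_ct_def ct_has1_def ct_has2_def swp_ct_def)

theorem mainTheorem1:
  fixes P :: "('o::finite, 'k::field) bqop"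
  assumes "bq_operad P"
    and "dong_in TYPE('b) P"
    and "\<exists>f :: ('a \<times> 'k \<times> nat) set \<Rightarrow> 'b. inj f"
  shows "dong_in TYPE('a) (di P) \<and> dong_in TYPE('a) (tri P)"
proof -
  obtain f :: "('a \<times> 'k \<times> nat) set \<Rightarrow> 'b" where f: "inj f" using assms(3) by blast
  have "dong_alg A" if "is_alg (di P) A" for A :: "('a, 'k, 'o \<times> two) alg"
    using replication.dong_alg_replication[OF replication_di[OF assms(1) that] assms(2) f] .
  moreover have "dong_alg A" if "is_alg (tri P) A" for A :: "('a, 'k, 'o \<times> ct2) alg"
    using replication.dong_alg_replication[OF replication_tri[OF assms(1) that] assms(2) f] .
  ultimately show ?thesis unfolding dong_in_def by blast
qed

end
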